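(* Let $G$ be a finite group, $N\trianglelefteq G$, $\widetilde{G}\leq G$ and $H\leq G$. Set $M:=N\cap H$, $\widetilde{H}:=\widetilde{G}\cap H$, $\widetilde{M}:=\widetilde{G}\cap M$ and $\widetilde{N}:=\widetilde{G}\cap N$, and assume $G=NH$, $H=\widetilde{H}M$ and $\mathbf{C}_G(N)\leq H$. Let $\widetilde{\vartheta}\in\mathrm{Irr}(\widetilde{N})$ and $\widetilde{\varphi}\in\mathrm{Irr}(\widetilde{M})$ be such that $\vartheta:=\widetilde{\vartheta}^{N}\in\mathrm{Irr}(N)$, $\varphi:=\widetilde{\varphi}^{M}\in\mathrm{Irr}(M)$ and $(\widetilde{G},\widetilde{N},\widetilde{\vartheta})\geq_c(\widetilde{H},\widetilde{M},\widetilde{\varphi})$. Assume that for every $N\leq J\leq G$, with $\widetilde{J}:=J\cap\widetilde{G}$, induction of characters gives bijections $\mathrm{Irr}(\widetilde{J}\mid\widetilde{\vartheta})\to\mathrm{Irr}(J\mid\vartheta)$ and $\mathrm{Irr}(\widetilde{J}\cap H\mid\widetilde{\varphi})\to\mathrm{Irr}(J\cap H\mid\varphi)$. Then $(G,N,\vartheta)\geq_c(H,M,\varphi)$.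
   Context: $\mathrm{Irr}(X\mid\theta)$ denotes the set of irreducible characters of $X$ whose restriction to the normal subgroup on which $\theta$ is defined has $\theta$ as a constituent; $\psi^X$ denotes induction. Character triples and $\geq_c$: a character triple $(G,N,\vartheta)$ consists of $N\trianglelefteq G$ and a $G$-invariant $\vartheta\in\mathrm{Irr}(N)$. A projective representation of $G$ associated with $\vartheta$ is a map $\mathcal{P}:G\to\mathrm{GL}_{\vartheta(1)}(\mathbb{C})$ with $\mathcal{P}(x)\mathcal{P}(y)=\alpha(x,y)\mathcal{P}(xy)$ for a factor set $\alpha$, such that $\mathcal{P}|_N$ is a representation affording $\vartheta$ and $\mathcal{P}(xn)=\mathcal{P}(x)\mathcal{P}(n)$, $\mathcal{P}(nx)=\mathcal{P}(n)\mathcal{P}(x)$ for $x\in G,n\in N$. One writes $(G,N,\vartheta)\geq_c(H,M,\varphi)$ for character triples if $G=NH$, $M=N\cap H$, $\mathbf{C}_G(N)\leq H$, and there are projective representations $\mathcal{P}$ of $G$ associated with $\vartheta$ and $\mathcal{P}'$ of $H$ associated with $\varphi$, with factor sets $\alpha,\alpha'$, such that $\alpha|_{H\times H}=\alpha'$ and for every $c\in\mathbf{C}_G(N)$ the matrices $\mathcal{P}(c)$, $\mathcal{P}'(c)$ are scalar with the same scalar. *)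

theory Defs
  imports "HOL-Algebra.Coset" "Jordan_Normal_Form.Matrix" Complex_Main
begin

(* All groups are subgroups (given as carrier subsets) of an ambient HOL-Algebra group G.
   Class functions / characters of a subgroup H are functions 'a => complex that vanish
   outside H. *)

definition mat_trace :: "complex mat \<Rightarrow> complex" where
  "mat_trace A = (\<Sum>i<dim_row A. A $$ (i,i))"

(* a (matrix) representation of degree n of the subgroup H of G (n = 0 allowed) *)
definition is_rep :: "('a,'b) monoid_scheme \<Rightarrow> 'a set \<Rightarrow> nat \<Rightarrow> ('a \<Rightarrow> complex mat) \<Rightarrow> bool" where
  "is_rep G H n \<rho> \<longleftrightarrow>
     (\<forall>h\<in>H. \<rho> h \<in> carrier_mat n n) \<and> \<rho> \<one>\<^bsub>G\<^esub> = 1\<^sub>m n \<and>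
     (\<forall>x\<in>H. \<forall>y\<in>H. \<rho> (x \<otimes>\<^bsub>G\<^esub> y) = \<rho> x * \<rho> y)"

(* irreducible: nonzero degree and no proper nontrivial invariant subspace,
   i.e. not simultaneously conjugate to block upper triangular form *)
definition irreducible_rep :: "('a,'b) monoid_scheme \<Rightarrow> 'a set \<Rightarrow> nat \<Rightarrow> ('a \<Rightarrow> complex mat) \<Rightarrow> bool" where
  "irreducible_rep G H n \<rho> \<longleftrightarrow> is_rep G H n \<rho> \<and> n > 0 \<and>
     \<not> (\<exists>P Q k. P \<in> carrier_mat n n \<and> Q \<in> carrier_mat n n \<and> P * Q = 1\<^sub>m n \<and> Q * P = 1\<^sub>m n \<and>
           0 < k \<and> k < n \<and>
           (\<forall>h\<in>H. \<forall>i j. k \<le> i \<longrightarrow> i < n \<longrightarrow> j < k \<longrightarrow> (Q * \<rho> h * P) $$ (i,j) = 0))"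

definition affords :: "'a set \<Rightarrow> ('a \<Rightarrow> complex mat) \<Rightarrow> ('a \<Rightarrow> complex) \<Rightarrow> bool" where
  "affords H \<rho> \<chi> \<longleftrightarrow> (\<forall>x. \<chi> x = (if x \<in> H then mat_trace (\<rho> x) else 0))"

(* characters (including the zero character) of H *)
definition Char :: "('a,'b) monoid_scheme \<Rightarrow> 'a set \<Rightarrow> ('a \<Rightarrow> complex) set" where
  "Char G H = {\<chi>. \<exists>n \<rho>. is_rep G H n \<rho> \<and> affords H \<rho> \<chi>}"

definition Irr :: "('a,'b) monoid_scheme \<Rightarrow> 'a set \<Rightarrow> ('a \<Rightarrow> complex) set" where
  "Irr G H = {\<chi>. \<exists>n \<rho>. irreducible_rep G H n \<rho> \<and> affords H \<rho> \<chi>}"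

(* Irr(X | \<theta>) for \<theta> a character of the subgroup N: \<theta> is a constituent of \<chi>|_N *)
definition Irr_over :: "('a,'b) monoid_scheme \<Rightarrow> 'a set \<Rightarrow> 'a set \<Rightarrow> ('a \<Rightarrow> complex) \<Rightarrow> ('a \<Rightarrow> complex) set" where
  "Irr_over G X N \<theta> = {\<chi> \<in> Irr G X. \<exists>\<psi> \<in> Char G N. \<forall>n\<in>N. \<chi> n = \<theta> n + \<psi> n}"

definition induce :: "('a,'b) monoid_scheme \<Rightarrow> 'a set \<Rightarrow> 'a set \<Rightarrow> ('a \<Rightarrow> complex) \<Rightarrow> 'a \<Rightarrow> complex" where
  "induce G H X \<psi> x = (if x \<in> X then
      (\<Sum>y\<in>X. (if y \<otimes>\<^bsub>G\<^esub> x \<otimes>\<^bsub>G\<^esub> inv\<^bsub>G\<^esub> y \<in> H then \<psi> (y \<otimes>\<^bsub>G\<^esub> x \<otimes>\<^bsub>G\<^esub> inv\<^bsub>G\<^esub> y) else 0)) / of_nat (card H)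
    else 0)"

definition centralizer_in :: "('a,'b) monoid_scheme \<Rightarrow> 'a set \<Rightarrow> 'a set \<Rightarrow> 'a set" where
  "centralizer_in G K N = {g \<in> K. \<forall>n\<in>N. g \<otimes>\<^bsub>G\<^esub> n = n \<otimes>\<^bsub>G\<^esub> g}"

definition char_triple :: "('a,'b) monoid_scheme \<Rightarrow> 'a set \<Rightarrow> 'a set \<Rightarrow> ('a \<Rightarrow> complex) \<Rightarrow> bool" where
  "char_triple G K N \<theta> \<longleftrightarrow> subgroup K G \<and> normal N (G\<lparr>carrier := K\<rparr>) \<and> \<theta> \<in> Irr G N \<and>
     (\<forall>k\<in>K. \<forall>n\<in>N. \<theta> (k \<otimes>\<^bsub>G\<^esub> n \<otimes>\<^bsub>G\<^esub> inv\<^bsub>G\<^esub> k) = \<theta> n)"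

definition proj_rep :: "('a,'b) monoid_scheme \<Rightarrow> 'a set \<Rightarrow> 'a set \<Rightarrow> ('a \<Rightarrow> complex)
     \<Rightarrow> ('a \<Rightarrow> complex mat) \<Rightarrow> ('a \<Rightarrow> 'a \<Rightarrow> complex) \<Rightarrow> bool" where
  "proj_rep G K N \<theta> P \<alpha> \<longleftrightarrow> (\<exists>d. of_nat d = \<theta> \<one>\<^bsub>G\<^esub> \<and>
     (\<forall>x\<in>K. P x \<in> carrier_mat d d \<and> invertible_mat (P x)) \<and>
     (\<forall>x\<in>K. \<forall>y\<in>K. P x * P y = \<alpha> x y \<cdot>\<^sub>m P (x \<otimes>\<^bsub>G\<^esub> y)) \<and>
     is_rep G N d P \<and> affords N P \<theta> \<and>
     (\<forall>x\<in>K. \<forall>n\<in>N. P (x \<otimes>\<^bsub>G\<^esub> n) = P x * P n \<and> P (n \<otimes>\<^bsub>G\<^esub> x) = P n * P x))"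

definition ge_c :: "('a,'b) monoid_scheme \<Rightarrow> 'a set \<Rightarrow> 'a set \<Rightarrow> ('a \<Rightarrow> complex)
     \<Rightarrow> 'a set \<Rightarrow> 'a set \<Rightarrow> ('a \<Rightarrow> complex) \<Rightarrow> bool" where
  "ge_c G K N \<theta> H M \<phi> \<longleftrightarrow> char_triple G K N \<theta> \<and> char_triple G H M \<phi> \<and> H \<subseteq> K \<and>
     K = N <#>\<^bsub>G\<^esub> H \<and> M = N \<inter> H \<and> centralizer_in G K N \<subseteq> H \<and>
     (\<exists>P \<alpha> P' \<alpha>'. proj_rep G K N \<theta> P \<alpha> \<and> proj_rep G H M \<phi> P' \<alpha>' \<and>
        (\<forall>x\<in>H. \<forall>y\<in>H. \<alpha> x y = \<alpha>' x y) \<and>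
        (\<forall>c\<in>centralizer_in G K N. \<exists>z d d'. P c = z \<cdot>\<^sub>m 1\<^sub>m d \<and> P' c = z \<cdot>\<^sub>m 1\<^sub>m d'))"

end

theory Submission
  imports Defs "Jordan_Normal_Form.Gauss_Jordan_Elimination" "Jordan_Normal_Form.Spectral_Radius"
begin

text \<open>
  Let \<open>P\<close> be a projective representation of \<open>Gt\<close> associated with \<open>\<theta>t\<close>. Writing the
  elements of \<open>N\<close> as \<open>t\<^sub>i n\<close> with \<open>n \<in> Gt \<inter> N\<close>, the block matrices \<open>(P (t\<^sub>i\<inverse> x t\<^sub>j))\<close>
  (zero blocks for arguments outside \<open>Gt\<close>) define a projective representation of \<open>G = N Gt\<close>
  associated with \<open>\<theta> = \<theta>t\<^sup>N\<close>; its factor set at \<open>(x, y)\<close> is the one of \<open>P\<close> at elements of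
  \<open>Gt \<inter> xN\<close> and \<open>Gt \<inter> yN\<close>. The same construction for \<open>H = (Gt \<inter> H)(N \<inter> H)\<close> gives a
  projective representation of \<open>H\<close> associated with \<open>\<phi>\<close> whose factor set is read off from
  \<open>Gt \<inter> H\<close>, where the two given factor sets agree. Finally, an element of \<open>C\<^sub>G(N)\<close> outside
  \<open>Gt\<close> would be represented by a matrix that is scalar (Schur's lemma, as \<open>\<theta>\<close> is irreducible)
  but has zero diagonal blocks; so \<open>C\<^sub>G(N) \<le> Gt \<inter> H\<close>, where the given representations are
  equal scalars, and the block matrices inherit these scalars.
\<close>

section \<open>Matrix sums, traces and matrix units\<close>

lemma mat_mult_index_sum:
  "A \<in> carrier_mat n m \<Longrightarrow> B \<in> carrier_mat m p \<Longrightarrow> i < n \<Longrightarrow> j < p \<Longrightarrow>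
   (A * B) $$ (i,j) = (\<Sum>l<m. A $$ (i,l) * B $$ (l,j))"
  by (simp add: index_mult_mat scalar_prod_def lessThan_atLeast0 row_def col_def)

lemma one_smult_mat [simp]: "(1::complex) \<cdot>\<^sub>m A = A"
  by (intro eq_matI) auto

lemma smult_smult_mat [simp]: "(a::complex) \<cdot>\<^sub>m (b \<cdot>\<^sub>m A) = (a * b) \<cdot>\<^sub>m A"
  by (intro eq_matI) auto

lemma invertible_mat_obtain_inverse:
  assumes "invertible_mat A" "A \<in> carrier_mat n n"
  obtains B where "B \<in> carrier_mat n n" "A * B = 1\<^sub>m n" "B * A = 1\<^sub>m n"
proof -
  from assms obtain B where AB: "A * B = 1\<^sub>m n" and BA: "B * A = 1\<^sub>m (dim_row B)"
    unfolding invertible_mat_def inverts_mat_def by auto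
  have "dim_col B = n" using AB by (metis index_mult_mat(3) index_one_mat(3))
  moreover have "dim_row B = n" using BA assms(2) by (metis carrier_matD(2) index_mult_mat(3) index_one_mat(3))
  ultimately show ?thesis using AB BA that by auto
qed

lemma smult_invertible_mat_cancel:
  assumes M: "M \<in> carrier_mat n n" and inv: "invertible_mat M" and n: "n > 0"
    and eq: "c1 \<cdot>\<^sub>m M = (c2::complex) \<cdot>\<^sub>m M"
  shows "c1 = c2"
proof -
  obtain B where B: "B \<in> carrier_mat n n" and MB: "M * B = 1\<^sub>m n"
    using invertible_mat_obtain_inverse[OF inv M] by blast
  have "(c1 \<cdot>\<^sub>m M) * B = (c2 \<cdot>\<^sub>m M) * B" using eq by simp
  then have "c1 \<cdot>\<^sub>m 1\<^sub>m n = c2 \<cdot>\<^sub>m 1\<^sub>m n" using mult_smult_assoc_mat[OF M B] MB by simp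
  then have "(c1 \<cdot>\<^sub>m 1\<^sub>m n) $$ (0,0) = (c2 \<cdot>\<^sub>m 1\<^sub>m n) $$ (0,0)" by simp
  then show ?thesis using n by simp
qed

lemma smult_one_mat_invertible_nonzero:
  assumes inv: "invertible_mat (z \<cdot>\<^sub>m 1\<^sub>m n)" and n: "0 < n"
  shows "(z::complex) \<noteq> 0"
proof
  assume "z = 0"
  obtain B where B: "B \<in> carrier_mat n n" and "z \<cdot>\<^sub>m 1\<^sub>m n * B = 1\<^sub>m n"
    using invertible_mat_obtain_inverse[OF inv smult_carrier_mat[OF one_carrier_mat]] by blast
  then have "z \<cdot>\<^sub>m B = 1\<^sub>m n" using mult_smult_assoc_mat[OF one_carrier_mat B] by simp
  then have "(z \<cdot>\<^sub>m B) $$ (0,0) = 1" using n by simp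
  then show False using B n \<open>z = 0\<close> by simp
qed

lemma mat_trace_mult_comm:
  assumes A: "A \<in> carrier_mat n m" and B: "B \<in> carrier_mat m n"
  shows "mat_trace (A * B) = mat_trace (B * A)"
proof -
  have "mat_trace (A * B) = (\<Sum>i<n. \<Sum>l<m. A $$ (i,l) * B $$ (l,i))"
    unfolding mat_trace_def using A by (auto intro!: sum.cong simp: mat_mult_index_sum[OF A B])
  also have "\<dots> = (\<Sum>l<m. \<Sum>i<n. B $$ (l,i) * A $$ (i,l))"
    by (subst sum.swap) (simp add: mult.commute)
  also have "\<dots> = mat_trace (B * A)"
    unfolding mat_trace_def using B by (auto intro!: sum.cong simp: mat_mult_index_sum[OF B A])
  finally show ?thesis .
qed

lemma mat_trace_smult_one_mat: "mat_trace (c \<cdot>\<^sub>m 1\<^sub>m d) = c * of_nat d"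
  unfolding mat_trace_def by simp

lemma sum_lessThan_mult_blocks:
  "(\<Sum>r<k*e. f r) = (\<Sum>j<k. \<Sum>c<e. f (j*e + c :: nat) :: 'c :: comm_monoid_add)"
proof -
  have bij: "bij_betw (\<lambda>(j,c). j*e + c) ({..<k} \<times> {..<e}) {..<k*e}"
  proof (rule bij_betwI[where g="\<lambda>r. (r div e, r mod e)"])
    show "(\<lambda>(j,c). j*e + c) \<in> {..<k} \<times> {..<e} \<rightarrow> {..<k*e}"
    proof
      fix x assume "x \<in> {..<k} \<times> {..<e}"
      then obtain j c where x: "x = (j,c)" "j < k" "c < e" by auto
      have "j*e + c < Suc j * e" using x by simp
      also have "\<dots> \<le> k * e" using x by (intro mult_le_mono1) auto
      finally show "(\<lambda>(j,c). j*e + c) x \<in> {..<k*e}" using x by simp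
    qed
    show "(\<lambda>r. (r div e, r mod e)) \<in> {..<k*e} \<rightarrow> {..<k} \<times> {..<e}"
      by (auto simp: less_mult_imp_div_less) (metis mod_less_divisor mult_zero_right neq0_conv not_less_zero)
  qed auto
  have "(\<Sum>r<k*e. f r) = (\<Sum>x\<in>{..<k} \<times> {..<e}. f ((\<lambda>(j,c). j*e + c) x))"
    by (rule sum.reindex_bij_betw[OF bij, symmetric])
  also have "\<dots> = (\<Sum>j<k. \<Sum>c<e. f (j*e + c))"
    by (simp add: sum.cartesian_product case_prod_beta)
  finally show ?thesis .
qed

definition mat_sum :: "nat \<Rightarrow> nat \<Rightarrow> ('g \<Rightarrow> complex mat) \<Rightarrow> 'g set \<Rightarrow> complex mat" where
  "mat_sum n m F S = mat n m (\<lambda>(i,j). \<Sum>g\<in>S. F g $$ (i,j))"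

lemma mat_sum_carrier [simp]: "mat_sum n m F S \<in> carrier_mat n m"
  unfolding mat_sum_def by simp

lemma mat_sum_dim [simp]: "dim_row (mat_sum n m F S) = n" "dim_col (mat_sum n m F S) = m"
  unfolding mat_sum_def by auto

lemma mat_sum_index: "i < n \<Longrightarrow> j < m \<Longrightarrow> mat_sum n m F S $$ (i,j) = (\<Sum>g\<in>S. F g $$ (i,j))"
  unfolding mat_sum_def by simp

lemma mult_mat_sum_left:
  assumes A: "A \<in> carrier_mat n m" and F: "\<And>g. g \<in> S \<Longrightarrow> F g \<in> carrier_mat m p"
  shows "A * mat_sum m p F S = mat_sum n p (\<lambda>g. A * F g) S"
proof (rule eq_matI)
  fix i j assume "i < dim_row (mat_sum n p (\<lambda>g. A * F g) S)" "j < dim_col (mat_sum n p (\<lambda>g. A * F g) S)"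
  then have i: "i < n" and j: "j < p" by auto
  have "(A * mat_sum m p F S) $$ (i,j) = (\<Sum>l<m. A $$ (i,l) * (\<Sum>g\<in>S. F g $$ (l,j)))"
    unfolding mat_mult_index_sum[OF A mat_sum_carrier i j] by (intro sum.cong) (auto simp: mat_sum_index j)
  also have "\<dots> = (\<Sum>g\<in>S. \<Sum>l<m. A $$ (i,l) * F g $$ (l,j))"
    by (simp add: sum_distrib_left sum.swap[of _ S])
  also have "\<dots> = (\<Sum>g\<in>S. (A * F g) $$ (i,j))"
    by (intro sum.cong refl) (simp add: mat_mult_index_sum[OF A F i j])
  finally show "(A * mat_sum m p F S) $$ (i,j) = mat_sum n p (\<lambda>g. A * F g) S $$ (i,j)"
    by (simp add: mat_sum_index[OF i j])
qed (use A in auto)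

lemma mult_mat_sum_right:
  assumes A: "A \<in> carrier_mat m p" and F: "\<And>g. g \<in> S \<Longrightarrow> F g \<in> carrier_mat n m"
  shows "mat_sum n m F S * A = mat_sum n p (\<lambda>g. F g * A) S"
proof (rule eq_matI)
  fix i j assume "i < dim_row (mat_sum n p (\<lambda>g. F g * A) S)" "j < dim_col (mat_sum n p (\<lambda>g. F g * A) S)"
  then have i: "i < n" and j: "j < p" by auto
  have "(mat_sum n m F S * A) $$ (i,j) = (\<Sum>l<m. (\<Sum>g\<in>S. F g $$ (i,l)) * A $$ (l,j))"
    unfolding mat_mult_index_sum[OF mat_sum_carrier A i j] by (intro sum.cong) (auto simp: mat_sum_index i)
  also have "\<dots> = (\<Sum>g\<in>S. \<Sum>l<m. F g $$ (i,l) * A $$ (l,j))"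
    by (simp add: sum_distrib_right sum.swap[of _ S])
  also have "\<dots> = (\<Sum>g\<in>S. (F g * A) $$ (i,j))"
    by (intro sum.cong refl) (simp add: mat_mult_index_sum[OF F A i j])
  finally show "(mat_sum n m F S * A) $$ (i,j) = mat_sum n p (\<lambda>g. F g * A) S $$ (i,j)"
    by (simp add: mat_sum_index[OF i j])
qed (use A in auto)

lemma mat_sum_reindex:
  assumes "bij_betw h S T"
  shows "mat_sum n m F T = mat_sum n m (\<lambda>g. F (h g)) S"
proof (rule eq_matI)
  fix i j assume "i < dim_row (mat_sum n m (\<lambda>g. F (h g)) S)" "j < dim_col (mat_sum n m (\<lambda>g. F (h g)) S)"
  then show "mat_sum n m F T $$ (i,j) = mat_sum n m (\<lambda>g. F (h g)) S $$ (i,j)"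
    using sum.reindex_bij_betw[OF assms, of "\<lambda>g. F g $$ (i,j)"] by (simp add: mat_sum_index)
qed auto

lemma mat_sum_cong:
  "(\<And>g. g \<in> S \<Longrightarrow> F g = F' g) \<Longrightarrow> mat_sum n m F S = mat_sum n m F' S"
  unfolding mat_sum_def by (intro eq_matI) auto

lemma mat_trace_mat_sum:
  "(\<And>g. g \<in> S \<Longrightarrow> F g \<in> carrier_mat n n) \<Longrightarrow> mat_trace (mat_sum n n F S) = (\<Sum>g\<in>S. mat_trace (F g))"
  unfolding mat_trace_def by (auto simp: mat_sum_index sum.swap[of _ S] intro!: sum.cong)

definition mat_unit :: "nat \<Rightarrow> nat \<Rightarrow> nat \<Rightarrow> nat \<Rightarrow> complex mat" where
  "mat_unit n m a b = mat n m (\<lambda>(i,j). if i = a \<and> j = b then 1 else 0)"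

lemma mat_unit_carrier [simp]: "mat_unit n m a b \<in> carrier_mat n m"
  unfolding mat_unit_def by simp

lemma mat_trace_mat_unit: "a < d \<Longrightarrow> b < d \<Longrightarrow> mat_trace (mat_unit d d a b) = (if a = b then 1 else 0)"
  unfolding mat_trace_def mat_unit_def by (auto simp: sum.delta)

lemma mult_mat_unit_mult_index:
  assumes A: "A \<in> carrier_mat n d" and B: "B \<in> carrier_mat e m" and a: "a < d" and b: "b < e"
    and i: "i < n" and j: "j < m"
  shows "(A * mat_unit d e a b * B) $$ (i,j) = A $$ (i,a) * B $$ (b,j)"
proof -
  have AE: "(A * mat_unit d e a b) $$ (i,l) = (if l = b then A $$ (i,a) else 0)" if l: "l < e" for l
  proof -
    have "(A * mat_unit d e a b) $$ (i,l) = (\<Sum>r<d. if r = a then (if l = b then A $$ (i,a) else 0) else 0)"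
      unfolding mat_mult_index_sum[OF A mat_unit_carrier i l]
      by (rule sum.cong) (use l in \<open>auto simp: mat_unit_def\<close>)
    then show ?thesis using a by simp
  qed
  have "(A * mat_unit d e a b * B) $$ (i,j) = (\<Sum>l<e. if l = b then A $$ (i,a) * B $$ (b,j) else 0)"
    unfolding mat_mult_index_sum[OF mult_carrier_mat[OF A mat_unit_carrier] B i j]
    by (rule sum.cong) (auto simp: AE)
  then show ?thesis using b by simp
qed

section \<open>Schur's lemma and the first orthogonality relation\<close>

lemma irreducible_rep_is_rep: "irreducible_rep G H d R \<Longrightarrow> is_rep G H d R"
  unfolding irreducible_rep_def by auto

lemma irreducible_rep_degree_pos: "irreducible_rep G H d R \<Longrightarrow> d > 0"
  unfolding irreducible_rep_def by auto

lemma is_rep_carrier: "is_rep G H d R \<Longrightarrow> h \<in> H \<Longrightarrow> R h \<in> carrier_mat d d"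
  unfolding is_rep_def by auto

lemma is_rep_mult: "is_rep G H d R \<Longrightarrow> x \<in> H \<Longrightarrow> y \<in> H \<Longrightarrow> R (x \<otimes>\<^bsub>G\<^esub> y) = R x * R y"
  unfolding is_rep_def by auto

lemma is_rep_inv_mult:
  assumes grp: "group G" and sub: "subgroup H G" and R: "is_rep G H d R" and g: "g \<in> H"
  shows "R (inv\<^bsub>G\<^esub> g) * R g = 1\<^sub>m d"
proof -
  have "R (inv\<^bsub>G\<^esub> g) * R g = R (inv\<^bsub>G\<^esub> g \<otimes>\<^bsub>G\<^esub> g)"
    using is_rep_mult[OF R subgroup.m_inv_closed[OF sub g] g] by simp
  also have "inv\<^bsub>G\<^esub> g \<otimes>\<^bsub>G\<^esub> g = \<one>\<^bsub>G\<^esub>"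
    using g sub grp by (meson group.l_inv subgroup.mem_carrier)
  finally show ?thesis using R unfolding is_rep_def by simp
qed

lemma pivot_fun_no_zero_row_one_mat:
  assumes C: "C \<in> carrier_mat d d" and pf: "pivot_fun C f d" and pivots: "\<And>i. i < d \<Longrightarrow> f i < d"
  shows "C = 1\<^sub>m d"
proof -
  have dr: "dim_row C = d" using C by auto
  note pD = pivot_funD[OF dr pf]
  have mono: "f i + j \<le> f (i + j)" if "i + j < d" for i j
    using that
  proof (induction j)
    case (Suc j)
    then have "f (i+j) < f (Suc (i+j))" using pD(3)[of "i+j"] pivots[of "Suc (i+j)"] by auto
    with Suc show ?case by auto
  qed simp
  have fi: "f i = i" if "i < d" for i
  proof -
    have "f 0 + i \<le> f i" "f i + (d - 1 - i) \<le> f (d - 1)" "f (d - 1) < d"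
      using mono[of 0 i] mono[of i "d - 1 - i"] pivots[of "d - 1"] that by auto
    then show ?thesis using that by linarith
  qed
  show ?thesis
  proof (rule eq_matI)
    fix i j assume "i < dim_row (1\<^sub>m d)" "j < dim_col (1\<^sub>m d)"
    then show "C $$ (i,j) = 1\<^sub>m d $$ (i,j)"
      using pD(4)[of j] pD(5)[of j i] fi[of j] pivots[of j] by (cases "i = j") auto
  qed (use C in auto)
qed

lemma row_echelon_form_square_cases:
  assumes C: "C \<in> carrier_mat d d" and ref: "row_echelon_form C"
  obtains k f where "k \<le> d"
    and "\<And>i j. k \<le> i \<Longrightarrow> i < d \<Longrightarrow> j < d \<Longrightarrow> C $$ (i,j) = 0"
    and "\<And>j. j < k \<Longrightarrow> f j < d"
    and "\<And>i j. i < d \<Longrightarrow> j < k \<Longrightarrow> C $$ (i, f j) = (if i = j then 1 else 0)"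
    and "k = d \<Longrightarrow> C = 1\<^sub>m d"
proof -
  from ref obtain f where pf: "pivot_fun C f d" unfolding row_echelon_form_def using C by auto
  have dr: "dim_row C = d" using C by auto
  note pD = pivot_funD[OF dr pf]
  define k where "k = (LEAST i. i = d \<or> (i < d \<and> f i = d))"
  have kd: "k \<le> d" unfolding k_def by (rule Least_le) simp
  have kprop: "k = d \<or> (k < d \<and> f k = d)" unfolding k_def by (rule LeastI[of _ d]) simp
  have zero_row: "f i = d" if "k \<le> i" "i < d" for i
    using that
  proof (induction i rule: dec_induct)
    case base then show ?case using kprop by auto
  next
    case (step i)
    then show ?case using pD(3)[of i] pD(1)[of "Suc i"] by auto
  qed
  have pivot: "f i < d" if "i < k" for i
  proof -
    have "\<not> (i = d \<or> (i < d \<and> f i = d))" using not_less_Least[of i] that unfolding k_def by blast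
    with that kd pD(1)[of i] show ?thesis by auto
  qed
  show ?thesis
  proof (rule that[OF kd _ pivot])
    show "C $$ (i,j) = 0" if "k \<le> i" "i < d" "j < d" for i j
      using pD(2)[of i j] zero_row[OF that(1,2)] that by auto
    show "C $$ (i, f j) = (if i = j then 1 else 0)" if "i < d" "j < k" for i j
      using pD(4)[of j] pD(5)[of j i] pivot[of j] kd that by auto
    show "C = 1\<^sub>m d" if "k = d"
      using pivot_fun_no_zero_row_one_mat[OF C pf] pivot that by simp
  qed
qed

lemma lower_left_block_zero:
  fixes X C B :: "complex mat"
  assumes X: "X \<in> carrier_mat d d" and C: "C \<in> carrier_mat d d" and B: "B \<in> carrier_mat d d"
    and XC: "X * C = C * B"
    and rowz: "\<And>i j. k \<le> i \<Longrightarrow> i < d \<Longrightarrow> j < d \<Longrightarrow> C $$ (i,j) = 0"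
    and fd: "\<And>j. j < k \<Longrightarrow> f j < d"
    and pivot: "\<And>i j. i < d \<Longrightarrow> j < k \<Longrightarrow> C $$ (i, f j) = (if i = j then 1 else 0)"
    and i: "k \<le> i" "i < d" and j: "j < k"
  shows "X $$ (i,j) = 0"
proof -
  have "X $$ (i,j) = (\<Sum>l<d. if l = j then X $$ (i,l) else 0)"
    using i j by simp
  also have "\<dots> = (\<Sum>l<d. X $$ (i,l) * C $$ (l, f j))"
    by (intro sum.cong refl) (simp add: pivot[OF _ j])
  also have "\<dots> = (C * B) $$ (i, f j)"
    unfolding XC[symmetric] by (rule mat_mult_index_sum[OF X C i(2) fd[OF j], symmetric])
  also have "\<dots> = 0"
    unfolding mat_mult_index_sum[OF C B i(2) fd[OF j]] using rowz[OF i] by simp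
  finally show ?thesis .
qed

text \<open>If \<open>A \<noteq> 0\<close> is singular, its column space is a proper nontrivial subspace;
  a row echelon form \<open>P * A\<close> exhibits the basis change that puts every \<open>R h\<close> into
  block upper triangular form.\<close>

lemma irreducible_rep_invariant_range_det:
  fixes R :: "'a \<Rightarrow> complex mat"
  assumes irr: "irreducible_rep G H d R" and A: "A \<in> carrier_mat d d"
    and inv: "\<forall>h\<in>H. \<exists>B\<in>carrier_mat d d. R h * A = A * B"
    and nz: "A \<noteq> 0\<^sub>m d d"
  shows "det A \<noteq> 0"
proof
  assume detA: "det A = 0"
  define C where "C = gauss_jordan_single A"
  note gj = gauss_jordan_single[OF A C_def[symmetric]]
  from gj(4) obtain P Q where CPA: "C = P * A" and P: "P \<in> carrier_mat d d" and Q: "Q \<in> carrier_mat d d"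
    and PQ: "P * Q = 1\<^sub>m d" and QP: "Q * P = 1\<^sub>m d" by blast
  have C: "C \<in> carrier_mat d d" by fact
  obtain k f where kd: "k \<le> d"
    and rowz: "\<And>i j. k \<le> i \<Longrightarrow> i < d \<Longrightarrow> j < d \<Longrightarrow> C $$ (i,j) = 0"
    and fd: "\<And>j. j < k \<Longrightarrow> f j < d"
    and pivot: "\<And>i j. i < d \<Longrightarrow> j < k \<Longrightarrow> C $$ (i, f j) = (if i = j then 1 else 0)"
    and full: "k = d \<Longrightarrow> C = 1\<^sub>m d"
    using row_echelon_form_square_cases[OF C gj(3)] by blast
  have "k > 0"
  proof (rule ccontr)
    assume "\<not> 0 < k"
    then have "C = 0\<^sub>m d d" using rowz C by (intro eq_matI) auto
    moreover have "Q * C = A" unfolding CPA using Q P A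
      by (metis QP assoc_mult_mat left_mult_one_mat)
    ultimately show False using nz Q by simp
  qed
  moreover have "k < d"
  proof (rule ccontr)
    assume "\<not> k < d"
    then have "det C = 1" using full kd by simp
    moreover have "det C = 0" unfolding CPA using det_mult[OF P A] detA by simp
    ultimately show False by simp
  qed
  moreover have "\<forall>h\<in>H. \<forall>i j. k \<le> i \<longrightarrow> i < d \<longrightarrow> j < k \<longrightarrow> (P * R h * Q) $$ (i,j) = 0"
  proof (intro ballI allI impI)
    fix h i j assume h: "h \<in> H" and i: "k \<le> i" "i < d" and j: "j < k"
    from inv h obtain B where B: "B \<in> carrier_mat d d" and RAB: "R h * A = A * B" by auto
    have Rh: "R h \<in> carrier_mat d d" using is_rep_carrier[OF irreducible_rep_is_rep[OF irr] h] .
    have "P * R h * Q * C = P * R h * (Q * P) * A"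
      unfolding CPA using P Q Rh A by (simp add: assoc_mult_mat[of _ d d _ d _ d])
    also have "\<dots> = P * (R h * A)" using P Q Rh A QP by (simp add: assoc_mult_mat[of _ d d _ d _ d])
    also have "\<dots> = C * B" unfolding RAB CPA using P A B by (simp add: assoc_mult_mat[of _ d d _ d _ d])
    finally show "(P * R h * Q) $$ (i,j) = 0"
      using lower_left_block_zero[OF _ C B _ rowz fd pivot i j] P Rh Q by simp
  qed
  ultimately show False using irr Q P PQ QP unfolding irreducible_rep_def by blast
qed

lemma schur_commutant_scalar:
  fixes R :: "'a \<Rightarrow> complex mat"
  assumes irr: "irreducible_rep G H d R" and X: "X \<in> carrier_mat d d"
    and comm: "\<forall>h\<in>H. R h * X = X * R h"
  obtains c where "X = c \<cdot>\<^sub>m 1\<^sub>m d"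
proof -
  from spectrum_non_empty[OF X irreducible_rep_degree_pos[OF irr]]
  obtain c where "eigenvalue X c" unfolding spectrum_def by auto
  then have det: "det (char_matrix X c) = 0" using eigenvalue_det[OF X] by auto
  define A where "A = char_matrix X c"
  have A: "A \<in> carrier_mat d d" unfolding A_def char_matrix_def using X by auto
  have AX: "A = X + (-c) \<cdot>\<^sub>m 1\<^sub>m d" unfolding A_def char_matrix_def using X by auto
  have "\<forall>h\<in>H. \<exists>B\<in>carrier_mat d d. R h * A = A * B"
  proof
    fix h assume h: "h \<in> H"
    have Rh: "R h \<in> carrier_mat d d" using is_rep_carrier[OF irreducible_rep_is_rep[OF irr] h] .
    have "R h * A = R h * X + R h * ((-c) \<cdot>\<^sub>m 1\<^sub>m d)" unfolding AX
      using Rh X by (simp add: mult_add_distrib_mat)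
    also have "\<dots> = X * R h + ((-c) \<cdot>\<^sub>m 1\<^sub>m d) * R h" using comm h Rh
      by (simp add: mult_smult_distrib[OF Rh one_carrier_mat] mult_smult_assoc_mat[OF one_carrier_mat Rh])
    also have "\<dots> = A * R h" unfolding AX using Rh X by (simp add: add_mult_distrib_mat)
    finally show "\<exists>B\<in>carrier_mat d d. R h * A = A * B" using Rh by blast
  qed
  from irreducible_rep_invariant_range_det[OF irr A this] det have "A = 0\<^sub>m d d"
    unfolding A_def by blast
  then have A0: "X + (-c) \<cdot>\<^sub>m 1\<^sub>m d = 0\<^sub>m d d" unfolding AX .
  have "X = c \<cdot>\<^sub>m 1\<^sub>m d"
  proof (rule eq_matI)
    fix i j assume ij: "i < dim_row (c \<cdot>\<^sub>m 1\<^sub>m d)" "j < dim_col (c \<cdot>\<^sub>m 1\<^sub>m d)"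
    have "(X + (-c) \<cdot>\<^sub>m 1\<^sub>m d) $$ (i,j) = 0" unfolding A0 using ij by simp
    then show "X $$ (i,j) = (c \<cdot>\<^sub>m 1\<^sub>m d) $$ (i,j)" using ij X by (cases "i = j") auto
  qed (use X in auto)
  then show ?thesis by (rule that)
qed

definition mat_average :: "('a,'b) monoid_scheme \<Rightarrow> 'a set \<Rightarrow> nat \<Rightarrow> nat
    \<Rightarrow> ('a \<Rightarrow> complex mat) \<Rightarrow> ('a \<Rightarrow> complex mat) \<Rightarrow> complex mat \<Rightarrow> complex mat" where
  "mat_average G H d0 d1 R0 R1 X = mat_sum d0 d1 (\<lambda>g. R0 g * X * R1 (inv\<^bsub>G\<^esub> g)) H"

lemma mat_average_carrier [simp]: "mat_average G H d0 d1 R0 R1 X \<in> carrier_mat d0 d1"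
  unfolding mat_average_def by simp

context
  fixes G :: "('a,'b) monoid_scheme" and H :: "'a set"
  assumes grp: "group G" and sub: "subgroup H G"
begin

lemma mat_average_intertwines:
  assumes R0: "is_rep G H d0 R0" and R1: "is_rep G H d1 R1" and X: "X \<in> carrier_mat d0 d1"
    and h: "h \<in> H"
  shows "R0 h * mat_average G H d0 d1 R0 R1 X = mat_average G H d0 d1 R0 R1 X * R1 h"
proof -
  interpret G: group G by (rule grp)
  have carr: "x \<in> carrier G" if "x \<in> H" for x using subgroup.mem_carrier[OF sub that] .
  have inH: "inv\<^bsub>G\<^esub> g \<in> H" if "g \<in> H" for g using subgroup.m_inv_closed[OF sub that] .
  have mH: "x \<otimes>\<^bsub>G\<^esub> y \<in> H" if "x \<in> H" "y \<in> H" for x y using subgroup.m_closed[OF sub that] .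
  have C0: "R0 g \<in> carrier_mat d0 d0" if "g \<in> H" for g using is_rep_carrier[OF R0 that] .
  have C1: "R1 g \<in> carrier_mat d1 d1" if "g \<in> H" for g using is_rep_carrier[OF R1 that] .
  have CF: "R0 g * X * R1 (inv\<^bsub>G\<^esub> g) \<in> carrier_mat d0 d1" if "g \<in> H" for g
    using C0[OF that] X C1[OF inH[OF that]] by auto
  have bij: "bij_betw (\<lambda>g. h \<otimes>\<^bsub>G\<^esub> g) H H"
    by (rule bij_betwI[where g="\<lambda>g. inv\<^bsub>G\<^esub> h \<otimes>\<^bsub>G\<^esub> g"])
      (use mH inH h carr in \<open>auto simp: G.m_assoc[symmetric]\<close>)
  have "R0 h * mat_average G H d0 d1 R0 R1 X = mat_sum d0 d1 (\<lambda>g. R0 h * (R0 g * X * R1 (inv\<^bsub>G\<^esub> g))) H"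
    unfolding mat_average_def by (rule mult_mat_sum_left[OF C0[OF h] CF])
  also have "\<dots> = mat_sum d0 d1 (\<lambda>g. R0 (h \<otimes>\<^bsub>G\<^esub> g) * X * R1 (inv\<^bsub>G\<^esub> (h \<otimes>\<^bsub>G\<^esub> g) \<otimes>\<^bsub>G\<^esub> h)) H"
  proof (rule mat_sum_cong)
    fix g assume g: "g \<in> H"
    have "inv\<^bsub>G\<^esub> (h \<otimes>\<^bsub>G\<^esub> g) \<otimes>\<^bsub>G\<^esub> h = inv\<^bsub>G\<^esub> g"
      using carr[OF h] carr[OF g] by (simp add: G.inv_mult_group G.m_assoc)
    moreover have "R0 h * (R0 g * X * R1 (inv\<^bsub>G\<^esub> g)) = R0 h * R0 g * X * R1 (inv\<^bsub>G\<^esub> g)"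
      using C0[OF h] C0[OF g] X C1[OF inH[OF g]]
      by (simp add: assoc_mult_mat[of _ d0 d0 _ d0 _ d1] assoc_mult_mat[of _ d0 d1 _ d1 _ d1]
          assoc_mult_mat[of _ d0 d0 _ d1 _ d1])
    ultimately show "R0 h * (R0 g * X * R1 (inv\<^bsub>G\<^esub> g))
        = R0 (h \<otimes>\<^bsub>G\<^esub> g) * X * R1 (inv\<^bsub>G\<^esub> (h \<otimes>\<^bsub>G\<^esub> g) \<otimes>\<^bsub>G\<^esub> h)"
      using is_rep_mult[OF R0 h g] by simp
  qed
  also have "\<dots> = mat_sum d0 d1 (\<lambda>g. R0 g * X * R1 (inv\<^bsub>G\<^esub> g \<otimes>\<^bsub>G\<^esub> h)) H"
    by (rule mat_sum_reindex[OF bij, symmetric])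
  also have "\<dots> = mat_sum d0 d1 (\<lambda>g. R0 g * X * R1 (inv\<^bsub>G\<^esub> g) * R1 h) H"
  proof (rule mat_sum_cong)
    fix g assume g: "g \<in> H"
    show "R0 g * X * R1 (inv\<^bsub>G\<^esub> g \<otimes>\<^bsub>G\<^esub> h) = R0 g * X * R1 (inv\<^bsub>G\<^esub> g) * R1 h"
      using is_rep_mult[OF R1 inH[OF g] h]
        assoc_mult_mat[OF mult_carrier_mat[OF C0[OF g] X] C1[OF inH[OF g]] C1[OF h]] by simp
  qed
  also have "\<dots> = mat_average G H d0 d1 R0 R1 X * R1 h"
    unfolding mat_average_def by (rule mult_mat_sum_right[symmetric, OF C1[OF h] CF])
  finally show ?thesis .
qed

lemma trace_sum_mat_average_mat_unit:
  assumes R0: "is_rep G H d0 R0" and R1: "is_rep G H d1 R1"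
  shows "(\<Sum>a<d0. \<Sum>b<d1. mat_average G H d0 d1 R0 R1 (mat_unit d0 d1 a b) $$ (a,b))
     = (\<Sum>g\<in>H. mat_trace (R0 g) * mat_trace (R1 (inv\<^bsub>G\<^esub> g)))"
proof -
  have C0: "R0 g \<in> carrier_mat d0 d0" and C1: "R1 (inv\<^bsub>G\<^esub> g) \<in> carrier_mat d1 d1" if "g \<in> H" for g
    using is_rep_carrier[OF R0 that] is_rep_carrier[OF R1 subgroup.m_inv_closed[OF sub that]] by auto
  have "(\<Sum>a<d0. \<Sum>b<d1. mat_average G H d0 d1 R0 R1 (mat_unit d0 d1 a b) $$ (a,b))
      = (\<Sum>a<d0. \<Sum>b<d1. \<Sum>g\<in>H. R0 g $$ (a,a) * R1 (inv\<^bsub>G\<^esub> g) $$ (b,b))"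
    unfolding mat_average_def
    by (intro sum.cong refl) (simp add: mat_sum_index mult_mat_unit_mult_index[OF C0 C1])
  also have "\<dots> = (\<Sum>g\<in>H. \<Sum>a<d0. \<Sum>b<d1. R0 g $$ (a,a) * R1 (inv\<^bsub>G\<^esub> g) $$ (b,b))"
    by (simp add: sum.swap[of _ H])
  also have "\<dots> = (\<Sum>g\<in>H. mat_trace (R0 g) * mat_trace (R1 (inv\<^bsub>G\<^esub> g)))"
  proof (rule sum.cong[OF refl])
    fix g assume g: "g \<in> H"
    show "(\<Sum>a<d0. \<Sum>b<d1. R0 g $$ (a,a) * R1 (inv\<^bsub>G\<^esub> g) $$ (b,b))
        = mat_trace (R0 g) * mat_trace (R1 (inv\<^bsub>G\<^esub> g))"
      unfolding mat_trace_def using C0[OF g] C1[OF g]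
      by (simp add: sum_distrib_left sum_distrib_right sum.swap[of _ "{..<d1}"])
  qed
  finally show ?thesis .
qed

lemma irreducible_mat_average_mat_unit:
  assumes irr: "irreducible_rep G H d R" and a: "a < d" and b: "b < d"
  shows "mat_average G H d d R R (mat_unit d d a b)
    = (if a = b then of_nat (card H) / of_nat d else 0) \<cdot>\<^sub>m 1\<^sub>m d"
proof -
  note R = irreducible_rep_is_rep[OF irr]
  have d: "d > 0" using irreducible_rep_degree_pos[OF irr] .
  have C: "R g \<in> carrier_mat d d" if "g \<in> H" for g using is_rep_carrier[OF R that] .
  have inH: "inv\<^bsub>G\<^esub> g \<in> H" if "g \<in> H" for g using subgroup.m_inv_closed[OF sub that] .
  define M where "M = mat_average G H d d R R (mat_unit d d a b)"
  have "\<forall>h\<in>H. R h * M = M * R h"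
    unfolding M_def using mat_average_intertwines[OF R R mat_unit_carrier] by auto
  then obtain c where Mc: "M = c \<cdot>\<^sub>m 1\<^sub>m d"
    using schur_commutant_scalar[OF irr mat_average_carrier] unfolding M_def by blast
  have "mat_trace M = (\<Sum>g\<in>H. mat_trace (R g * mat_unit d d a b * R (inv\<^bsub>G\<^esub> g)))"
    unfolding M_def mat_average_def
    by (intro mat_trace_mat_sum mult_carrier_mat[OF mult_carrier_mat[OF C mat_unit_carrier] C] inH)
  also have "\<dots> = (\<Sum>g\<in>H. mat_trace (R (inv\<^bsub>G\<^esub> g) * (R g * mat_unit d d a b)))"
  proof (rule sum.cong[OF refl])
    fix g assume g: "g \<in> H"
    show "mat_trace (R g * mat_unit d d a b * R (inv\<^bsub>G\<^esub> g))
        = mat_trace (R (inv\<^bsub>G\<^esub> g) * (R g * mat_unit d d a b))"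
      by (rule mat_trace_mult_comm[OF mult_carrier_mat[OF C[OF g] mat_unit_carrier] C[OF inH[OF g]]])
  qed
  also have "\<dots> = (\<Sum>g\<in>H. mat_trace (mat_unit d d a b))"
    using C inH is_rep_inv_mult[OF grp sub R]
    by (intro sum.cong refl) (simp add: assoc_mult_mat[of _ d d _ d _ d, symmetric] left_mult_one_mat[OF mat_unit_carrier])
  also have "\<dots> = of_nat (card H) * (if a = b then 1 else 0)"
    using mat_trace_mat_unit[OF a b] by simp
  finally have "c * of_nat d = of_nat (card H) * (if a = b then 1 else 0)"
    unfolding Mc mat_trace_smult_one_mat .
  then show ?thesis using d unfolding M_def[symmetric] Mc by (auto simp: field_simps)
qed

lemma irreducible_character_norm:
  assumes irr: "irreducible_rep G H d R"
  shows "(\<Sum>g\<in>H. mat_trace (R g) * mat_trace (R (inv\<^bsub>G\<^esub> g))) = of_nat (card H)"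
proof -
  note R = irreducible_rep_is_rep[OF irr]
  have "(\<Sum>g\<in>H. mat_trace (R g) * mat_trace (R (inv\<^bsub>G\<^esub> g)))
      = (\<Sum>a<d. \<Sum>b<d. mat_average G H d d R R (mat_unit d d a b) $$ (a,b))"
    using trace_sum_mat_average_mat_unit[OF R R] by simp
  also have "\<dots> = (\<Sum>a<d. \<Sum>b<d. if a = b then of_nat (card H) / of_nat d else 0)"
    by (intro sum.cong refl) (simp add: irreducible_mat_average_mat_unit[OF irr])
  also have "\<dots> = (\<Sum>a<d. of_nat (card H) / of_nat d)"
    by (simp add: sum.delta)
  also have "\<dots> = of_nat (card H)" using irreducible_rep_degree_pos[OF irr] by simp
  finally show ?thesis .
qed

lemma equal_character_intertwiner:
  assumes fin: "finite H" and irr: "irreducible_rep G H d R0" and R: "is_rep G H d R"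
    and tr: "\<forall>g\<in>H. mat_trace (R g) = mat_trace (R0 g)"
  obtains Y Y' where "Y \<in> carrier_mat d d" "Y' \<in> carrier_mat d d" "Y * Y' = 1\<^sub>m d" "Y' * Y = 1\<^sub>m d"
    and "\<forall>h\<in>H. R0 h * Y = Y * R h"
proof -
  note R0 = irreducible_rep_is_rep[OF irr]
  have inH: "inv\<^bsub>G\<^esub> g \<in> H" if "g \<in> H" for g using subgroup.m_inv_closed[OF sub that] .
  have "\<exists>a<d. \<exists>b<d. mat_average G H d d R0 R (mat_unit d d a b) \<noteq> 0\<^sub>m d d"
  proof (rule ccontr)
    assume "\<not> ?thesis"
    then have "(\<Sum>g\<in>H. mat_trace (R0 g) * mat_trace (R (inv\<^bsub>G\<^esub> g))) = 0"
      unfolding trace_sum_mat_average_mat_unit[OF R0 R, symmetric] by simp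
    moreover have "(\<Sum>g\<in>H. mat_trace (R0 g) * mat_trace (R (inv\<^bsub>G\<^esub> g))) = of_nat (card H)"
      using irreducible_character_norm[OF irr] tr inH by (auto intro!: sum.cong)
    moreover have "card H > 0" using fin subgroup.one_closed[OF sub] card_gt_0_iff by blast
    ultimately show False by simp
  qed
  then obtain a b where nz: "mat_average G H d d R0 R (mat_unit d d a b) \<noteq> 0\<^sub>m d d" by auto
  define Y where "Y = mat_average G H d d R0 R (mat_unit d d a b)"
  have Y: "Y \<in> carrier_mat d d" unfolding Y_def by simp
  have YI: "\<forall>h\<in>H. R0 h * Y = Y * R h"
    unfolding Y_def using mat_average_intertwines[OF R0 R mat_unit_carrier] by auto
  have "det Y \<noteq> 0"
    by (rule irreducible_rep_invariant_range_det[OF irr Y]) (use YI is_rep_carrier[OF R] nz Y_def in auto)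
  from det_non_zero_imp_unit[OF Y this, of "()"] obtain Y' where "Y' \<in> carrier_mat d d"
    and "Y * Y' = 1\<^sub>m d" and "Y' * Y = 1\<^sub>m d"
    unfolding Units_def ring_mat_def by auto
  then show ?thesis using that Y YI by blast
qed

lemma equal_character_commutant_scalar:
  assumes fin: "finite H" and irr: "irreducible_rep G H d R0" and R: "is_rep G H d R"
    and tr: "\<forall>g\<in>H. mat_trace (R g) = mat_trace (R0 g)"
    and T: "T \<in> carrier_mat d d" and comm: "\<forall>h\<in>H. R h * T = T * R h"
  obtains c where "T = c \<cdot>\<^sub>m 1\<^sub>m d"
proof -
  note C0 = is_rep_carrier[OF irreducible_rep_is_rep[OF irr]] and C = is_rep_carrier[OF R]
  obtain Y Y' where Y: "Y \<in> carrier_mat d d" and Y': "Y' \<in> carrier_mat d d"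
    and YY': "Y * Y' = 1\<^sub>m d" and Y'Y: "Y' * Y = 1\<^sub>m d" and YI: "\<forall>h\<in>H. R0 h * Y = Y * R h"
    using equal_character_intertwiner[OF fin irr R tr] by blast
  have Y'I: "Y' * R0 h = R h * Y'" if h: "h \<in> H" for h
  proof -
    have "Y' * R0 h = Y' * (R0 h * Y) * Y'" using Y' Y C0[OF h] YY'
      by (simp add: assoc_mult_mat[of _ d d _ d _ d])
    also have "\<dots> = R h * Y'" using YI h Y' Y C[OF h] Y'Y
      by (simp add: assoc_mult_mat[of _ d d _ d _ d] assoc_mult_mat[of Y' d d Y d _ d, symmetric])
    finally show ?thesis .
  qed
  define T' where "T' = Y * T * Y'"
  have T': "T' \<in> carrier_mat d d" unfolding T'_def using Y T Y' by auto
  have "\<forall>h\<in>H. R0 h * T' = T' * R0 h"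
  proof
    fix h assume h: "h \<in> H"
    have "R0 h * T' = (R0 h * Y) * T * Y'" unfolding T'_def using Y T Y' C0[OF h]
      by (simp add: assoc_mult_mat[of _ d d _ d _ d])
    also have "\<dots> = Y * (R h * T) * Y'" using YI h Y T Y' C[OF h]
      by (simp add: assoc_mult_mat[of _ d d _ d _ d])
    also have "\<dots> = Y * T * (R h * Y')" using comm h Y T Y' C[OF h]
      by (simp add: assoc_mult_mat[of _ d d _ d _ d])
    also have "\<dots> = T' * R0 h" unfolding T'_def using Y'I[OF h] Y T Y' C0[OF h] C[OF h]
      by (simp add: assoc_mult_mat[of _ d d _ d _ d])
    finally show "R0 h * T' = T' * R0 h" .
  qed
  then obtain c where c: "T' = c \<cdot>\<^sub>m 1\<^sub>m d" using schur_commutant_scalar[OF irr T'] by blast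
  have "T = Y' * T' * Y" unfolding T'_def using Y T Y' Y'Y
    by (simp add: assoc_mult_mat[of _ d d _ d _ d] assoc_mult_mat[of Y' d d Y d _ d, symmetric])
  also have "\<dots> = c \<cdot>\<^sub>m 1\<^sub>m d" unfolding c using Y' Y Y'Y
    using mult_smult_distrib[OF Y' one_carrier_mat, of c] mult_smult_assoc_mat[OF Y' Y, of c] by simp
  finally show ?thesis by (rule that)
qed

end

section \<open>Transversals\<close>

lemma (in group) inv_mult_cancel_left: "x \<in> carrier G \<Longrightarrow> y \<in> carrier G \<Longrightarrow> inv x \<otimes> (x \<otimes> y) = y"
  by (simp add: m_assoc[symmetric])

lemma (in group) mult_inv_cancel_left: "x \<in> carrier G \<Longrightarrow> y \<in> carrier G \<Longrightarrow> x \<otimes> (inv x \<otimes> y) = y"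
  by (simp add: m_assoc[symmetric])

lemmas (in group) group_simps = m_assoc inv_mult_group inv_mult_cancel_left mult_inv_cancel_left
  inv_inv l_inv r_inv l_one r_one inv_closed m_closed

lemma canonical_coset_rep_exists:
  assumes grp: "group G" and N: "subgroup N G" and L: "subgroup L G"
  obtains r where "\<And>n. n \<in> N \<Longrightarrow> r n \<in> N \<and> inv\<^bsub>G\<^esub> (r n) \<otimes>\<^bsub>G\<^esub> n \<in> L"
    and "\<And>n n'. n \<in> N \<Longrightarrow> n' \<in> N \<Longrightarrow> inv\<^bsub>G\<^esub> (r n) \<otimes>\<^bsub>G\<^esub> r n' \<in> L \<Longrightarrow> r n = r n'"
proof -
  interpret G: group G by (rule grp)
  have N_carrier: "x \<in> carrier G" if "x \<in> N" for x using subgroup.mem_carrier[OF N that] .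
  note L_m_closed = subgroup.m_closed[OF L] and L_inv_closed = subgroup.m_inv_closed[OF L]
  define cls where "cls n = {m \<in> N. inv\<^bsub>G\<^esub> m \<otimes>\<^bsub>G\<^esub> n \<in> L}" for n
  define r where "r n = (SOME m. m \<in> cls n)" for n
  have r: "r n \<in> N \<and> inv\<^bsub>G\<^esub> (r n) \<otimes>\<^bsub>G\<^esub> n \<in> L" if n: "n \<in> N" for n
  proof -
    have "n \<in> cls n" unfolding cls_def using n N_carrier subgroup.one_closed[OF L] by simp
    then have "r n \<in> cls n" unfolding r_def by (rule someI)
    then show ?thesis unfolding cls_def by auto
  qed
  have cls_eq: "cls n = cls n'" if n: "n \<in> N" "n' \<in> N" and nn': "inv\<^bsub>G\<^esub> n \<otimes>\<^bsub>G\<^esub> n' \<in> L" for n n'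
  proof -
    have "inv\<^bsub>G\<^esub> m \<otimes>\<^bsub>G\<^esub> n \<in> L \<longleftrightarrow> inv\<^bsub>G\<^esub> m \<otimes>\<^bsub>G\<^esub> n' \<in> L" if m: "m \<in> N" for m
    proof
      assume "inv\<^bsub>G\<^esub> m \<otimes>\<^bsub>G\<^esub> n \<in> L"
      moreover have "inv\<^bsub>G\<^esub> m \<otimes>\<^bsub>G\<^esub> n' = (inv\<^bsub>G\<^esub> m \<otimes>\<^bsub>G\<^esub> n) \<otimes>\<^bsub>G\<^esub> (inv\<^bsub>G\<^esub> n \<otimes>\<^bsub>G\<^esub> n')"
        using m n N_carrier by (simp add: G.group_simps)
      ultimately show "inv\<^bsub>G\<^esub> m \<otimes>\<^bsub>G\<^esub> n' \<in> L" using L_m_closed nn' by simp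
    next
      assume "inv\<^bsub>G\<^esub> m \<otimes>\<^bsub>G\<^esub> n' \<in> L"
      moreover have "inv\<^bsub>G\<^esub> m \<otimes>\<^bsub>G\<^esub> n = (inv\<^bsub>G\<^esub> m \<otimes>\<^bsub>G\<^esub> n') \<otimes>\<^bsub>G\<^esub> inv\<^bsub>G\<^esub> (inv\<^bsub>G\<^esub> n \<otimes>\<^bsub>G\<^esub> n')"
        using m n N_carrier by (simp add: G.group_simps)
      ultimately show "inv\<^bsub>G\<^esub> m \<otimes>\<^bsub>G\<^esub> n \<in> L" using L_m_closed L_inv_closed nn' by simp
    qed
    then show ?thesis unfolding cls_def by blast
  qed
  have r_eq: "r n = r n'" if n: "n \<in> N" "n' \<in> N" and rr: "inv\<^bsub>G\<^esub> (r n) \<otimes>\<^bsub>G\<^esub> r n' \<in> L" for n n'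
  proof -
    have "inv\<^bsub>G\<^esub> n \<otimes>\<^bsub>G\<^esub> n'
        = inv\<^bsub>G\<^esub> (inv\<^bsub>G\<^esub> (r n) \<otimes>\<^bsub>G\<^esub> n) \<otimes>\<^bsub>G\<^esub> ((inv\<^bsub>G\<^esub> (r n) \<otimes>\<^bsub>G\<^esub> r n') \<otimes>\<^bsub>G\<^esub> (inv\<^bsub>G\<^esub> (r n') \<otimes>\<^bsub>G\<^esub> n'))"
      using r n N_carrier by (simp add: G.group_simps)
    also have "\<dots> \<in> L" using r n rr L_m_closed L_inv_closed by simp
    finally show ?thesis unfolding r_def using cls_eq[OF n] by simp
  qed
  show ?thesis using that r r_eq by blast
qed

lemma left_transversal_exists:
  assumes grp: "group G" and fin: "finite (carrier G)" and N: "subgroup N G" and L: "subgroup L G"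
  obtains k :: nat and t where "\<forall>i<k. t i \<in> N"
    and "\<forall>i<k. \<forall>j<k. inv\<^bsub>G\<^esub> (t i) \<otimes>\<^bsub>G\<^esub> t j \<in> L \<longrightarrow> i = j"
    and "\<forall>n\<in>N. \<exists>i<k. inv\<^bsub>G\<^esub> (t i) \<otimes>\<^bsub>G\<^esub> n \<in> L"
proof -
  obtain r where r: "\<And>n. n \<in> N \<Longrightarrow> r n \<in> N \<and> inv\<^bsub>G\<^esub> (r n) \<otimes>\<^bsub>G\<^esub> n \<in> L"
    and r_eq: "\<And>n n'. n \<in> N \<Longrightarrow> n' \<in> N \<Longrightarrow> inv\<^bsub>G\<^esub> (r n) \<otimes>\<^bsub>G\<^esub> r n' \<in> L \<Longrightarrow> r n = r n'"
    using canonical_coset_rep_exists[OF grp N L] by blast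
  define T where "T = r ` N"
  have "finite T" unfolding T_def using finite_subset[OF _ fin] subgroup.subset[OF N] by auto
  from ex_bij_betw_nat_finite[OF this] obtain t where t: "bij_betw t {0..<card T} T" by blast
  have tT: "t i \<in> T" if "i < card T" for i using t that unfolding bij_betw_def by auto
  show ?thesis
  proof (rule that[of "card T" t]; intro allI impI ballI)
    show "t i \<in> N" if "i < card T" for i using tT[OF that] r unfolding T_def by auto
    show "i = j" if i: "i < card T" and j: "j < card T" and ij: "inv\<^bsub>G\<^esub> (t i) \<otimes>\<^bsub>G\<^esub> t j \<in> L" for i j
    proof -
      obtain n n' where "n \<in> N" "t i = r n" "n' \<in> N" "t j = r n'" using tT[OF i] tT[OF j] unfolding T_def by auto
      then have "t i = t j" using r_eq ij by simp
      then show ?thesis using t i j unfolding bij_betw_def inj_on_def by auto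
    qed
    show "\<exists>i<card T. inv\<^bsub>G\<^esub> (t i) \<otimes>\<^bsub>G\<^esub> n \<in> L" if n: "n \<in> N" for n
    proof -
      have "r n \<in> t ` {0..<card T}" using t n unfolding T_def bij_betw_def by auto
      then show ?thesis using r[OF n] by force
    qed
  qed
qed

section \<open>Inducing a projective representation\<close>

lemma affords_one_degree:
  "is_rep G H d R \<Longrightarrow> \<one>\<^bsub>G\<^esub> \<in> H \<Longrightarrow> affords H R \<chi> \<Longrightarrow> \<chi> \<one>\<^bsub>G\<^esub> = of_nat d"
  unfolding is_rep_def affords_def mat_trace_def by simp

text \<open>With \<open>t 0, \<dots>, t (k - 1)\<close> representatives of the left cosets of \<open>L \<inter> N\<close> in \<open>N\<close>,
  the block matrix \<open>(P (t i\<inverse> x t j))\<^sub>i\<^sub>j\<close>, with the blocks outside \<open>L\<close> replaced by zero,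
  is a projective representation of \<open>K = N L\<close> associated with \<open>\<theta>\<^sup>N\<close> (\<open>ind_rep\<close> below).\<close>

locale induced_proj_rep =
  fixes G :: "('a,'b) monoid_scheme" and K N L :: "'a set"
    and \<theta> :: "'a \<Rightarrow> complex" and P :: "'a \<Rightarrow> complex mat" and \<alpha> :: "'a \<Rightarrow> 'a \<Rightarrow> complex"
    and e k :: nat and t :: "nat \<Rightarrow> 'a"
  assumes grp: "group G" and fin: "finite (carrier G)"
    and K: "subgroup K G" and N: "subgroup N G" and NK: "N \<subseteq> K"
    and nrm: "\<forall>x\<in>K. \<forall>n\<in>N. x \<otimes>\<^bsub>G\<^esub> n \<otimes>\<^bsub>G\<^esub> inv\<^bsub>G\<^esub> x \<in> N"
    and L: "subgroup L G" and LK: "L \<subseteq> K"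
    and KNL: "\<forall>x\<in>K. \<exists>n\<in>N. \<exists>l\<in>L. x = n \<otimes>\<^bsub>G\<^esub> l"
    and irr: "\<theta> \<in> Irr G (L \<inter> N)"
    and \<theta>_inv: "\<forall>l\<in>L. \<forall>n\<in>L \<inter> N. \<theta> (l \<otimes>\<^bsub>G\<^esub> n \<otimes>\<^bsub>G\<^esub> inv\<^bsub>G\<^esub> l) = \<theta> n"
    and proj: "proj_rep G L (L \<inter> N) \<theta> P \<alpha>"
    and deg: "of_nat e = \<theta> \<one>\<^bsub>G\<^esub>"
    and t_in: "\<forall>i<k. t i \<in> N"
    and t_dist: "\<forall>i<k. \<forall>j<k. inv\<^bsub>G\<^esub> (t i) \<otimes>\<^bsub>G\<^esub> t j \<in> L \<longrightarrow> i = j"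
    and t_cover: "\<forall>n\<in>N. \<exists>i<k. inv\<^bsub>G\<^esub> (t i) \<otimes>\<^bsub>G\<^esub> n \<in> L"
begin

interpretation Gr: group G by (rule grp)

lemma K_carrier: "x \<in> K \<Longrightarrow> x \<in> carrier G" using subgroup.mem_carrier[OF K] .
lemma N_carrier: "x \<in> N \<Longrightarrow> x \<in> carrier G" using subgroup.mem_carrier[OF N] .
lemma L_carrier: "x \<in> L \<Longrightarrow> x \<in> carrier G" using subgroup.mem_carrier[OF L] .
lemma t_carrier: "i < k \<Longrightarrow> t i \<in> carrier G" using t_in N_carrier by auto
lemma t_mem_N: "i < k \<Longrightarrow> t i \<in> N" using t_in by auto
lemma N_mem_K: "x \<in> N \<Longrightarrow> x \<in> K" using NK by auto
lemma L_mem_K: "x \<in> L \<Longrightarrow> x \<in> K" using LK by auto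

lemma K_inv_closed: "x \<in> K \<Longrightarrow> inv\<^bsub>G\<^esub> x \<in> K" using subgroup.m_inv_closed[OF K] .
lemma N_inv_closed: "x \<in> N \<Longrightarrow> inv\<^bsub>G\<^esub> x \<in> N" using subgroup.m_inv_closed[OF N] .
lemma L_inv_closed: "x \<in> L \<Longrightarrow> inv\<^bsub>G\<^esub> x \<in> L" using subgroup.m_inv_closed[OF L] .
lemma K_m_closed: "x \<in> K \<Longrightarrow> y \<in> K \<Longrightarrow> x \<otimes>\<^bsub>G\<^esub> y \<in> K" using subgroup.m_closed[OF K] .
lemma N_m_closed: "x \<in> N \<Longrightarrow> y \<in> N \<Longrightarrow> x \<otimes>\<^bsub>G\<^esub> y \<in> N" using subgroup.m_closed[OF N] .
lemma L_m_closed: "x \<in> L \<Longrightarrow> y \<in> L \<Longrightarrow> x \<otimes>\<^bsub>G\<^esub> y \<in> L" using subgroup.m_closed[OF L] .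
lemma L_one_closed: "\<one>\<^bsub>G\<^esub> \<in> L" using subgroup.one_closed[OF L] .
lemma N_one_closed: "\<one>\<^bsub>G\<^esub> \<in> N" using subgroup.one_closed[OF N] .

lemma conj_N: "x \<in> K \<Longrightarrow> n \<in> N \<Longrightarrow> x \<otimes>\<^bsub>G\<^esub> (n \<otimes>\<^bsub>G\<^esub> inv\<^bsub>G\<^esub> x) \<in> N"
  using nrm K_carrier N_carrier by (simp add: Gr.m_assoc)

lemma conj_inv_N: "x \<in> K \<Longrightarrow> n \<in> N \<Longrightarrow> inv\<^bsub>G\<^esub> x \<otimes>\<^bsub>G\<^esub> (n \<otimes>\<^bsub>G\<^esub> x) \<in> N"
  using conj_N[OF K_inv_closed, of x n] K_carrier by simp

lemma
  shows P_carrier: "x \<in> L \<Longrightarrow> P x \<in> carrier_mat e e"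
    and P_invertible: "x \<in> L \<Longrightarrow> invertible_mat (P x)"
    and P_mult: "x \<in> L \<Longrightarrow> y \<in> L \<Longrightarrow> P x * P y = \<alpha> x y \<cdot>\<^sub>m P (x \<otimes>\<^bsub>G\<^esub> y)"
    and P_one: "P \<one>\<^bsub>G\<^esub> = 1\<^sub>m e"
    and P_mult_LN: "x \<in> L \<Longrightarrow> n \<in> L \<inter> N \<Longrightarrow> P (x \<otimes>\<^bsub>G\<^esub> n) = P x * P n \<and> P (n \<otimes>\<^bsub>G\<^esub> x) = P n * P x"
    and \<theta>_eq: "\<theta> x = (if x \<in> L \<inter> N then mat_trace (P x) else 0)"
proof -
  obtain d where d: "of_nat d = \<theta> \<one>\<^bsub>G\<^esub>"
    and P: "\<forall>x\<in>L. P x \<in> carrier_mat d d \<and> invertible_mat (P x)"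
    and mult: "\<forall>x\<in>L. \<forall>y\<in>L. P x * P y = \<alpha> x y \<cdot>\<^sub>m P (x \<otimes>\<^bsub>G\<^esub> y)"
    and rep: "is_rep G (L \<inter> N) d P" and aff: "affords (L \<inter> N) P \<theta>"
    and mult_LN: "\<forall>x\<in>L. \<forall>n\<in>L \<inter> N. P (x \<otimes>\<^bsub>G\<^esub> n) = P x * P n \<and> P (n \<otimes>\<^bsub>G\<^esub> x) = P n * P x"
    using proj unfolding proj_rep_def by blast
  have "d = e" using d deg of_nat_eq_iff by metis
  then show "x \<in> L \<Longrightarrow> P x \<in> carrier_mat e e" "x \<in> L \<Longrightarrow> invertible_mat (P x)"
    using P by auto
  show "x \<in> L \<Longrightarrow> y \<in> L \<Longrightarrow> P x * P y = \<alpha> x y \<cdot>\<^sub>m P (x \<otimes>\<^bsub>G\<^esub> y)" using mult by blast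
  show "P \<one>\<^bsub>G\<^esub> = 1\<^sub>m e" using rep \<open>d = e\<close> unfolding is_rep_def by blast
  show "x \<in> L \<Longrightarrow> n \<in> L \<inter> N \<Longrightarrow> P (x \<otimes>\<^bsub>G\<^esub> n) = P x * P n \<and> P (n \<otimes>\<^bsub>G\<^esub> x) = P n * P x"
    using mult_LN by blast
  show "\<theta> x = (if x \<in> L \<inter> N then mat_trace (P x) else 0)" using aff unfolding affords_def by blast
qed

lemma \<theta>_outside: "x \<notin> L \<inter> N \<Longrightarrow> \<theta> x = 0"
  using \<theta>_eq[of x] by auto

lemma e_pos: "e > 0"
proof -
  from irr obtain n R where R: "irreducible_rep G (L \<inter> N) n R" and aff: "affords (L \<inter> N) R \<theta>"
    unfolding Irr_def by auto
  have "of_nat n = \<theta> \<one>\<^bsub>G\<^esub>"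
    using affords_one_degree[OF irreducible_rep_is_rep[OF R] _ aff] L_one_closed N_one_closed by simp
  then have "n = e" using deg of_nat_eq_iff by metis
  then show ?thesis using irreducible_rep_degree_pos[OF R] by simp
qed

lemma P_inverse:
  assumes "x \<in> L" obtains B where "B \<in> carrier_mat e e" "P x * B = 1\<^sub>m e" "B * P x = 1\<^sub>m e"
  using invertible_mat_obtain_inverse[OF P_invertible[OF assms] P_carrier[OF assms]] by blast

lemma transversal_block_exists: assumes x: "x \<in> K" and i: "i < k"
  shows "\<exists>j<k. inv\<^bsub>G\<^esub> (t i) \<otimes>\<^bsub>G\<^esub> (x \<otimes>\<^bsub>G\<^esub> t j) \<in> L"
proof -
  have "inv\<^bsub>G\<^esub> x \<otimes>\<^bsub>G\<^esub> t i \<in> K" using K_m_closed[OF K_inv_closed[OF x] N_mem_K[OF t_mem_N[OF i]]] .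
  then obtain n l where n: "n \<in> N" and l: "l \<in> L" and eq: "inv\<^bsub>G\<^esub> x \<otimes>\<^bsub>G\<^esub> t i = n \<otimes>\<^bsub>G\<^esub> l"
    using KNL by blast
  from t_cover n obtain j where j: "j < k" and l0: "inv\<^bsub>G\<^esub> (t j) \<otimes>\<^bsub>G\<^esub> n \<in> L" by blast
  have ti: "t i = x \<otimes>\<^bsub>G\<^esub> (n \<otimes>\<^bsub>G\<^esub> l)"
    using eq x i n l K_carrier N_carrier L_carrier t_carrier by (metis Gr.inv_solve_left' Gr.m_closed)
  have "inv\<^bsub>G\<^esub> (t i) \<otimes>\<^bsub>G\<^esub> (x \<otimes>\<^bsub>G\<^esub> t j) = inv\<^bsub>G\<^esub> l \<otimes>\<^bsub>G\<^esub> inv\<^bsub>G\<^esub> (inv\<^bsub>G\<^esub> (t j) \<otimes>\<^bsub>G\<^esub> n)"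
    unfolding ti using x n l j K_carrier N_carrier L_carrier t_carrier by (simp add: Gr.group_simps)
  also have "\<dots> \<in> L" using L_m_closed[OF L_inv_closed[OF l] L_inv_closed[OF l0]] .
  finally show ?thesis using j by blast
qed

lemma transversal_block_unique: assumes x: "x \<in> K" and i: "i < k" and j: "j < k" and j': "j' < k"
  and a: "inv\<^bsub>G\<^esub> (t i) \<otimes>\<^bsub>G\<^esub> (x \<otimes>\<^bsub>G\<^esub> t j) \<in> L"
  and a': "inv\<^bsub>G\<^esub> (t i) \<otimes>\<^bsub>G\<^esub> (x \<otimes>\<^bsub>G\<^esub> t j') \<in> L"
  shows "j = j'"
proof -
  have "inv\<^bsub>G\<^esub> (inv\<^bsub>G\<^esub> (t i) \<otimes>\<^bsub>G\<^esub> (x \<otimes>\<^bsub>G\<^esub> t j)) \<otimes>\<^bsub>G\<^esub> (inv\<^bsub>G\<^esub> (t i) \<otimes>\<^bsub>G\<^esub> (x \<otimes>\<^bsub>G\<^esub> t j'))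
      = inv\<^bsub>G\<^esub> (t j) \<otimes>\<^bsub>G\<^esub> t j'"
    using x i j j' K_carrier t_carrier by (simp add: Gr.group_simps)
  moreover have "inv\<^bsub>G\<^esub> (inv\<^bsub>G\<^esub> (t i) \<otimes>\<^bsub>G\<^esub> (x \<otimes>\<^bsub>G\<^esub> t j)) \<otimes>\<^bsub>G\<^esub> (inv\<^bsub>G\<^esub> (t i) \<otimes>\<^bsub>G\<^esub> (x \<otimes>\<^bsub>G\<^esub> t j')) \<in> L"
    using L_m_closed[OF L_inv_closed[OF a] a'] .
  ultimately show ?thesis using t_dist j j' by auto
qed

lemma factor_mult_right_LN: assumes a: "a \<in> L" and b: "b \<in> L" and n: "n \<in> L \<inter> N"
  shows "\<alpha> a (b \<otimes>\<^bsub>G\<^esub> n) = \<alpha> a b"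
proof -
  have nL: "n \<in> L" using IntD1[OF n] .
  have bn: "b \<otimes>\<^bsub>G\<^esub> n \<in> L" using L_m_closed[OF b nL] .
  have abn: "a \<otimes>\<^bsub>G\<^esub> (b \<otimes>\<^bsub>G\<^esub> n) \<in> L" using L_m_closed[OF a bn] .
  have "P a * P (b \<otimes>\<^bsub>G\<^esub> n) = P a * (P b * P n)" using P_mult_LN b n by auto
  also have "\<dots> = (P a * P b) * P n" using P_carrier a b nL by (simp add: assoc_mult_mat[of _ e e _ e _ e])
  also have "\<dots> = \<alpha> a b \<cdot>\<^sub>m (P (a \<otimes>\<^bsub>G\<^esub> b) * P n)"
    using P_mult a b mult_smult_assoc_mat[OF P_carrier[OF L_m_closed[OF a b]] P_carrier[OF nL]] by simp
  also have "P (a \<otimes>\<^bsub>G\<^esub> b) * P n = P (a \<otimes>\<^bsub>G\<^esub> (b \<otimes>\<^bsub>G\<^esub> n))"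
    using conjunct1[OF P_mult_LN[OF L_m_closed[OF a b] n]] Gr.m_assoc[OF L_carrier[OF a] L_carrier[OF b] L_carrier[OF nL]] by simp
  finally have "\<alpha> a (b \<otimes>\<^bsub>G\<^esub> n) \<cdot>\<^sub>m P (a \<otimes>\<^bsub>G\<^esub> (b \<otimes>\<^bsub>G\<^esub> n)) = \<alpha> a b \<cdot>\<^sub>m P (a \<otimes>\<^bsub>G\<^esub> (b \<otimes>\<^bsub>G\<^esub> n))"
    using P_mult a bn by simp
  then show ?thesis using smult_invertible_mat_cancel[OF P_carrier[OF abn] P_invertible[OF abn] e_pos] by auto
qed

lemma conj_LN: assumes b: "b \<in> L" and n: "n \<in> L \<inter> N" shows "inv\<^bsub>G\<^esub> b \<otimes>\<^bsub>G\<^esub> (n \<otimes>\<^bsub>G\<^esub> b) \<in> L \<inter> N"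
proof -
  have "inv\<^bsub>G\<^esub> b \<otimes>\<^bsub>G\<^esub> (n \<otimes>\<^bsub>G\<^esub> b) \<in> N" using conj_inv_N[OF L_mem_K[OF b] IntD2[OF n]] .
  moreover have "inv\<^bsub>G\<^esub> b \<otimes>\<^bsub>G\<^esub> (n \<otimes>\<^bsub>G\<^esub> b) \<in> L" using L_m_closed[OF L_inv_closed[OF b] L_m_closed[OF IntD1[OF n] b]] .
  ultimately show ?thesis by auto
qed

lemma factor_mult_left_LN: assumes a: "a \<in> L" and b: "b \<in> L" and n: "n \<in> L \<inter> N"
  shows "\<alpha> (a \<otimes>\<^bsub>G\<^esub> n) b = \<alpha> a b"
proof -
  have nL: "n \<in> L" using IntD1[OF n] .
  have an: "a \<otimes>\<^bsub>G\<^esub> n \<in> L" using L_m_closed[OF a nL] .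
  have nb: "n \<otimes>\<^bsub>G\<^esub> b \<in> L" using L_m_closed[OF nL b] .
  have anb: "a \<otimes>\<^bsub>G\<^esub> (n \<otimes>\<^bsub>G\<^esub> b) \<in> L" using L_m_closed[OF a nb] .
  have "P (a \<otimes>\<^bsub>G\<^esub> n) * P b = (P a * P n) * P b" using P_mult_LN a n by auto
  also have "\<dots> = P a * (P n * P b)" using P_carrier a b nL by (simp add: assoc_mult_mat[of _ e e _ e _ e])
  also have "\<dots> = P a * P (n \<otimes>\<^bsub>G\<^esub> b)" using P_mult_LN b n by auto
  also have "\<dots> = \<alpha> a (n \<otimes>\<^bsub>G\<^esub> b) \<cdot>\<^sub>m P (a \<otimes>\<^bsub>G\<^esub> (n \<otimes>\<^bsub>G\<^esub> b))" using P_mult a nb by auto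
  finally have "\<alpha> (a \<otimes>\<^bsub>G\<^esub> n) b \<cdot>\<^sub>m P (a \<otimes>\<^bsub>G\<^esub> (n \<otimes>\<^bsub>G\<^esub> b)) = \<alpha> a (n \<otimes>\<^bsub>G\<^esub> b) \<cdot>\<^sub>m P (a \<otimes>\<^bsub>G\<^esub> (n \<otimes>\<^bsub>G\<^esub> b))"
    using P_mult an b a nL L_carrier by (simp add: Gr.m_assoc)
  then have "\<alpha> (a \<otimes>\<^bsub>G\<^esub> n) b = \<alpha> a (n \<otimes>\<^bsub>G\<^esub> b)"
    using smult_invertible_mat_cancel[OF P_carrier[OF anb] P_invertible[OF anb] e_pos] by auto
  also have "n \<otimes>\<^bsub>G\<^esub> b = b \<otimes>\<^bsub>G\<^esub> (inv\<^bsub>G\<^esub> b \<otimes>\<^bsub>G\<^esub> (n \<otimes>\<^bsub>G\<^esub> b))"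
    using b nL L_carrier by (simp add: Gr.mult_inv_cancel_left)
  also have "\<alpha> a \<dots> = \<alpha> a b" using factor_mult_right_LN[OF a b conj_LN[OF b n]] .
  finally show ?thesis .
qed

lemma factor_nonzero: assumes a: "a \<in> L" and b: "b \<in> L" shows "\<alpha> a b \<noteq> 0"
proof
  assume z: "\<alpha> a b = 0"
  obtain A where A: "A \<in> carrier_mat e e" "P a * A = 1\<^sub>m e" using P_inverse[OF a] by blast
  obtain B where B: "B \<in> carrier_mat e e" "P b * B = 1\<^sub>m e" using P_inverse[OF b] by blast
  have "P a * P b = 0\<^sub>m e e" using P_mult a b z P_carrier[OF L_m_closed[OF a b]] by auto
  then have "P a * P b * (B * A) = 0\<^sub>m e e" using A B by simp
  moreover have "P a * P b * (B * A) = 1\<^sub>m e"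
  proof -
    have "P a * P b * (B * A) = P a * (P b * (B * A))"
      by (rule assoc_mult_mat[OF P_carrier[OF a] P_carrier[OF b] mult_carrier_mat[OF B(1) A(1)]])
    also have "P b * (B * A) = (P b * B) * A" by (rule assoc_mult_mat[symmetric, OF P_carrier[OF b] B(1) A(1)])
    also have "\<dots> = A" using B(2) A(1) by simp
    finally show ?thesis using A(2) by simp
  qed
  ultimately have "(1\<^sub>m e :: complex mat) $$ (0,0) = 0\<^sub>m e e $$ (0,0)" by simp
  then show False using e_pos by simp
qed

lemma factor_one_right: assumes a: "a \<in> L" shows "\<alpha> a \<one>\<^bsub>G\<^esub> = 1"
proof -
  have "\<alpha> a \<one>\<^bsub>G\<^esub> \<cdot>\<^sub>m P a = 1 \<cdot>\<^sub>m P a"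
    using P_mult a L_one_closed P_one P_carrier[OF a] L_carrier by (metis Gr.r_one right_mult_one_mat one_smult_mat)
  then show ?thesis using smult_invertible_mat_cancel[OF P_carrier[OF a] P_invertible[OF a] e_pos] by auto
qed

lemma factor_one_left: assumes a: "a \<in> L" shows "\<alpha> \<one>\<^bsub>G\<^esub> a = 1"
proof -
  have "\<alpha> \<one>\<^bsub>G\<^esub> a \<cdot>\<^sub>m P a = 1 \<cdot>\<^sub>m P a"
    using P_mult a L_one_closed P_one P_carrier[OF a] L_carrier by (metis Gr.l_one left_mult_one_mat one_smult_mat)
  then show ?thesis using smult_invertible_mat_cancel[OF P_carrier[OF a] P_invertible[OF a] e_pos] by auto
qed

lemma factor_cong_N: assumes a: "a \<in> L" and a': "a' \<in> L" and b: "b \<in> L" and b': "b' \<in> L"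
  and aa: "inv\<^bsub>G\<^esub> a \<otimes>\<^bsub>G\<^esub> a' \<in> N" and bb: "inv\<^bsub>G\<^esub> b \<otimes>\<^bsub>G\<^esub> b' \<in> N"
  shows "\<alpha> a b = \<alpha> a' b'"
proof -
  have na: "inv\<^bsub>G\<^esub> a \<otimes>\<^bsub>G\<^esub> a' \<in> L \<inter> N" using aa L_m_closed[OF L_inv_closed[OF a] a'] by auto
  have nb: "inv\<^bsub>G\<^esub> b \<otimes>\<^bsub>G\<^esub> b' \<in> L \<inter> N" using bb L_m_closed[OF L_inv_closed[OF b] b'] by auto
  have "a' = a \<otimes>\<^bsub>G\<^esub> (inv\<^bsub>G\<^esub> a \<otimes>\<^bsub>G\<^esub> a')" using a a' L_carrier by (simp add: Gr.mult_inv_cancel_left)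
  moreover have "b' = b \<otimes>\<^bsub>G\<^esub> (inv\<^bsub>G\<^esub> b \<otimes>\<^bsub>G\<^esub> b')" using b b' L_carrier by (simp add: Gr.mult_inv_cancel_left)
  ultimately have "\<alpha> a' b' = \<alpha> (a \<otimes>\<^bsub>G\<^esub> (inv\<^bsub>G\<^esub> a \<otimes>\<^bsub>G\<^esub> a')) (b \<otimes>\<^bsub>G\<^esub> (inv\<^bsub>G\<^esub> b \<otimes>\<^bsub>G\<^esub> b'))" by simp
  also have "\<dots> = \<alpha> a (b \<otimes>\<^bsub>G\<^esub> (inv\<^bsub>G\<^esub> b \<otimes>\<^bsub>G\<^esub> b'))" using factor_mult_left_LN[OF a _ na] L_m_closed[OF b IntD1[OF nb]] by simp
  also have "\<dots> = \<alpha> a b" using factor_mult_right_LN[OF a b nb] .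
  finally show ?thesis by simp
qed

definition ind_deg where "ind_deg = k * e"

definition P_ext where "P_ext y = (if y \<in> L then P y else 0\<^sub>m e e)"

definition ind_rep where
  "ind_rep x = mat ind_deg ind_deg
     (\<lambda>(p,q). P_ext (inv\<^bsub>G\<^esub> (t (p div e)) \<otimes>\<^bsub>G\<^esub> (x \<otimes>\<^bsub>G\<^esub> t (q div e))) $$ (p mod e, q mod e))"

definition coset_rep where "coset_rep x = (SOME a. a \<in> L \<and> inv\<^bsub>G\<^esub> x \<otimes>\<^bsub>G\<^esub> a \<in> N)"

definition ind_factor where "ind_factor x y = \<alpha> (coset_rep x) (coset_rep y)"

lemma ind_rep_carrier [simp]: "ind_rep x \<in> carrier_mat ind_deg ind_deg"
  unfolding ind_rep_def by simp

lemma ind_rep_dim [simp]: "dim_row (ind_rep x) = ind_deg" "dim_col (ind_rep x) = ind_deg"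
  unfolding ind_rep_def by simp_all

lemma ind_rep_index: "p < ind_deg \<Longrightarrow> q < ind_deg \<Longrightarrow>
  ind_rep x $$ (p,q) = P_ext (inv\<^bsub>G\<^esub> (t (p div e)) \<otimes>\<^bsub>G\<^esub> (x \<otimes>\<^bsub>G\<^esub> t (q div e))) $$ (p mod e, q mod e)"
  unfolding ind_rep_def by simp

lemma ind_deg_block: "p < ind_deg \<Longrightarrow> p div e < k \<and> p mod e < e"
  unfolding ind_deg_def using e_pos by (simp add: less_mult_imp_div_less)

lemma block_div [simp]: "c < e \<Longrightarrow> (j * e + c) div e = j" and block_mod [simp]: "c < e \<Longrightarrow> (j * e + c) mod e = c"
  using e_pos by simp_all

lemma block_eq_iff [simp]:
  assumes "a < e" "b < e" shows "i * e + a = j * e + b \<longleftrightarrow> i = j \<and> a = b"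
  by (metis assms block_div block_mod)

lemma ind_deg_blockE:
  assumes "p < ind_deg" obtains i a where "i < k" "a < e" "p = i * e + a"
proof (rule that[of "p div e" "p mod e"])
  show "p div e < k" "p mod e < e" using ind_deg_block[OF assms] by auto
qed simp

lemma block_less_ind_deg: "j < k \<Longrightarrow> c < e \<Longrightarrow> j * e + c < ind_deg"
proof -
  assume j: "j < k" and c: "c < e"
  have "j * e + c < Suc j * e" using c by simp
  also have "\<dots> \<le> k * e" using j by (intro mult_le_mono1) auto
  finally show ?thesis unfolding ind_deg_def .
qed

lemma ind_rep_block: "i < k \<Longrightarrow> j < k \<Longrightarrow> a < e \<Longrightarrow> b < e \<Longrightarrow>
  ind_rep x $$ (i * e + a, j * e + b) = P_ext (inv\<^bsub>G\<^esub> (t i) \<otimes>\<^bsub>G\<^esub> (x \<otimes>\<^bsub>G\<^esub> t j)) $$ (a,b)"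
  by (simp add: ind_rep_index block_less_ind_deg)

lemma P_ext_outside: "y \<notin> L \<Longrightarrow> a < e \<Longrightarrow> b < e \<Longrightarrow> P_ext y $$ (a,b) = 0"
  unfolding P_ext_def by simp

lemma coset_rep: assumes x: "x \<in> K" shows "coset_rep x \<in> L \<and> inv\<^bsub>G\<^esub> x \<otimes>\<^bsub>G\<^esub> coset_rep x \<in> N"
proof -
  obtain n l where n: "n \<in> N" and l: "l \<in> L" and xe: "x = n \<otimes>\<^bsub>G\<^esub> l" using KNL x by blast
  have "inv\<^bsub>G\<^esub> x \<otimes>\<^bsub>G\<^esub> l = inv\<^bsub>G\<^esub> l \<otimes>\<^bsub>G\<^esub> (inv\<^bsub>G\<^esub> n \<otimes>\<^bsub>G\<^esub> l)"
    unfolding xe using n l N_carrier L_carrier by (simp add: Gr.group_simps)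
  also have "\<dots> \<in> N" using conj_inv_N[OF L_mem_K[OF l] N_inv_closed[OF n]] .
  finally have "l \<in> L \<and> inv\<^bsub>G\<^esub> x \<otimes>\<^bsub>G\<^esub> l \<in> N" using l by blast
  then show ?thesis unfolding coset_rep_def by (rule someI)
qed

lemma ind_factor_cong_N:
  assumes x: "x \<in> K" and y: "y \<in> K" and a: "a \<in> L" and b: "b \<in> L"
    and xa: "inv\<^bsub>G\<^esub> x \<otimes>\<^bsub>G\<^esub> a \<in> N" and yb: "inv\<^bsub>G\<^esub> y \<otimes>\<^bsub>G\<^esub> b \<in> N"
  shows "ind_factor x y = \<alpha> a b"
proof -
  have same_coset: "inv\<^bsub>G\<^esub> (coset_rep z) \<otimes>\<^bsub>G\<^esub> c \<in> N"
    if z: "z \<in> K" and c: "c \<in> L" and zc: "inv\<^bsub>G\<^esub> z \<otimes>\<^bsub>G\<^esub> c \<in> N" for z c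
  proof -
    note r = coset_rep[OF z]
    have "inv\<^bsub>G\<^esub> (coset_rep z) \<otimes>\<^bsub>G\<^esub> c = inv\<^bsub>G\<^esub> (inv\<^bsub>G\<^esub> z \<otimes>\<^bsub>G\<^esub> coset_rep z) \<otimes>\<^bsub>G\<^esub> (inv\<^bsub>G\<^esub> z \<otimes>\<^bsub>G\<^esub> c)"
      using r z c K_carrier L_carrier by (simp add: Gr.group_simps)
    also have "\<dots> \<in> N" using N_m_closed[OF N_inv_closed[OF conjunct2[OF r]] zc] .
    finally show ?thesis .
  qed
  show ?thesis unfolding ind_factor_def
    using factor_cong_N[OF conjunct1[OF coset_rep[OF x]] a conjunct1[OF coset_rep[OF y]] b
        same_coset[OF x a xa] same_coset[OF y b yb]] .
qed

lemma transversal_block_mult: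
  assumes x: "x \<in> K" and y: "y \<in> K" and i: "i < k" and j: "j < k" and l: "l < k"
  shows "inv\<^bsub>G\<^esub> (t i) \<otimes>\<^bsub>G\<^esub> ((x \<otimes>\<^bsub>G\<^esub> y) \<otimes>\<^bsub>G\<^esub> t l)
      = (inv\<^bsub>G\<^esub> (t i) \<otimes>\<^bsub>G\<^esub> (x \<otimes>\<^bsub>G\<^esub> t j)) \<otimes>\<^bsub>G\<^esub> (inv\<^bsub>G\<^esub> (t j) \<otimes>\<^bsub>G\<^esub> (y \<otimes>\<^bsub>G\<^esub> t l))"
  using i j l x y K_carrier t_carrier by (simp add: Gr.group_simps)

lemma transversal_block_mult_mem:
  assumes x: "x \<in> K" and y: "y \<in> K" and i: "i < k" and j: "j < k" and l: "l < k"
    and A: "inv\<^bsub>G\<^esub> (t i) \<otimes>\<^bsub>G\<^esub> (x \<otimes>\<^bsub>G\<^esub> t j) \<in> L"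
  shows "inv\<^bsub>G\<^esub> (t i) \<otimes>\<^bsub>G\<^esub> ((x \<otimes>\<^bsub>G\<^esub> y) \<otimes>\<^bsub>G\<^esub> t l) \<in> L \<longleftrightarrow> inv\<^bsub>G\<^esub> (t j) \<otimes>\<^bsub>G\<^esub> (y \<otimes>\<^bsub>G\<^esub> t l) \<in> L"
proof -
  have "inv\<^bsub>G\<^esub> (t j) \<otimes>\<^bsub>G\<^esub> (y \<otimes>\<^bsub>G\<^esub> t l)
      = inv\<^bsub>G\<^esub> (inv\<^bsub>G\<^esub> (t i) \<otimes>\<^bsub>G\<^esub> (x \<otimes>\<^bsub>G\<^esub> t j)) \<otimes>\<^bsub>G\<^esub> (inv\<^bsub>G\<^esub> (t i) \<otimes>\<^bsub>G\<^esub> ((x \<otimes>\<^bsub>G\<^esub> y) \<otimes>\<^bsub>G\<^esub> t l))"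
    using i j l x y K_carrier t_carrier by (simp add: Gr.group_simps)
  then show ?thesis using L_m_closed[OF A] L_m_closed[OF L_inv_closed[OF A]] unfolding transversal_block_mult[OF x y i j l]
    by metis
qed

lemma transversal_block_factor:
  assumes x: "x \<in> K" and y: "y \<in> K" and i: "i < k" and j: "j < k" and l: "l < k"
    and A: "inv\<^bsub>G\<^esub> (t i) \<otimes>\<^bsub>G\<^esub> (x \<otimes>\<^bsub>G\<^esub> t j) \<in> L" and B: "inv\<^bsub>G\<^esub> (t j) \<otimes>\<^bsub>G\<^esub> (y \<otimes>\<^bsub>G\<^esub> t l) \<in> L"
  shows "\<alpha> (inv\<^bsub>G\<^esub> (t i) \<otimes>\<^bsub>G\<^esub> (x \<otimes>\<^bsub>G\<^esub> t j)) (inv\<^bsub>G\<^esub> (t j) \<otimes>\<^bsub>G\<^esub> (y \<otimes>\<^bsub>G\<^esub> t l)) = ind_factor x y"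
proof (rule ind_factor_cong_N[symmetric, OF x y A B])
  have "inv\<^bsub>G\<^esub> x \<otimes>\<^bsub>G\<^esub> (inv\<^bsub>G\<^esub> (t i) \<otimes>\<^bsub>G\<^esub> (x \<otimes>\<^bsub>G\<^esub> t j)) = (inv\<^bsub>G\<^esub> x \<otimes>\<^bsub>G\<^esub> (inv\<^bsub>G\<^esub> (t i) \<otimes>\<^bsub>G\<^esub> x)) \<otimes>\<^bsub>G\<^esub> t j"
    using x i j K_carrier t_carrier by (simp add: Gr.group_simps)
  also have "\<dots> \<in> N" using N_m_closed[OF conj_inv_N[OF x N_inv_closed[OF t_mem_N[OF i]]] t_mem_N[OF j]] .
  finally show "inv\<^bsub>G\<^esub> x \<otimes>\<^bsub>G\<^esub> (inv\<^bsub>G\<^esub> (t i) \<otimes>\<^bsub>G\<^esub> (x \<otimes>\<^bsub>G\<^esub> t j)) \<in> N" .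
  have "inv\<^bsub>G\<^esub> y \<otimes>\<^bsub>G\<^esub> (inv\<^bsub>G\<^esub> (t j) \<otimes>\<^bsub>G\<^esub> (y \<otimes>\<^bsub>G\<^esub> t l)) = (inv\<^bsub>G\<^esub> y \<otimes>\<^bsub>G\<^esub> (inv\<^bsub>G\<^esub> (t j) \<otimes>\<^bsub>G\<^esub> y)) \<otimes>\<^bsub>G\<^esub> t l"
    using y j l K_carrier t_carrier by (simp add: Gr.group_simps)
  also have "\<dots> \<in> N" using N_m_closed[OF conj_inv_N[OF y N_inv_closed[OF t_mem_N[OF j]]] t_mem_N[OF l]] .
  finally show "inv\<^bsub>G\<^esub> y \<otimes>\<^bsub>G\<^esub> (inv\<^bsub>G\<^esub> (t j) \<otimes>\<^bsub>G\<^esub> (y \<otimes>\<^bsub>G\<^esub> t l)) \<in> N" .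
qed

lemma P_ext_block_product:
  assumes x: "x \<in> K" and y: "y \<in> K" and i: "i < k" and j: "j < k" and l: "l < k"
    and a: "a < e" and b: "b < e"
  shows "(\<Sum>c<e. P_ext (inv\<^bsub>G\<^esub> (t i) \<otimes>\<^bsub>G\<^esub> (x \<otimes>\<^bsub>G\<^esub> t j)) $$ (a,c) * P_ext (inv\<^bsub>G\<^esub> (t j) \<otimes>\<^bsub>G\<^esub> (y \<otimes>\<^bsub>G\<^esub> t l)) $$ (c,b))
    = (if inv\<^bsub>G\<^esub> (t i) \<otimes>\<^bsub>G\<^esub> (x \<otimes>\<^bsub>G\<^esub> t j) \<in> L
       then ind_factor x y * P_ext (inv\<^bsub>G\<^esub> (t i) \<otimes>\<^bsub>G\<^esub> ((x \<otimes>\<^bsub>G\<^esub> y) \<otimes>\<^bsub>G\<^esub> t l)) $$ (a,b) else 0)"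
    (is "(\<Sum>c<e. P_ext ?A $$ (a,c) * P_ext ?B $$ (c,b)) = (if ?A \<in> L then _ * P_ext ?C $$ (a,b) else 0)")
proof (cases "?A \<in> L")
  case A: True
  show ?thesis
  proof (cases "?B \<in> L")
    case B: True
    have "(\<Sum>c<e. P_ext ?A $$ (a,c) * P_ext ?B $$ (c,b)) = (P ?A * P ?B) $$ (a,b)"
      using mat_mult_index_sum[OF P_carrier[OF A] P_carrier[OF B] a b] A B unfolding P_ext_def by simp
    also have "\<dots> = \<alpha> ?A ?B * P ?C $$ (a,b)"
      using P_mult[OF A B] P_carrier[OF L_m_closed[OF A B]] a b transversal_block_mult[OF x y i j l] by simp
    finally show ?thesis
      using transversal_block_factor[OF x y i j l A B] transversal_block_mult_mem[OF x y i j l A] A B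
      unfolding P_ext_def by simp
  next
    case B: False
    then have "?C \<notin> L" using transversal_block_mult_mem[OF x y i j l A] by blast
    then show ?thesis using B P_ext_outside a b by simp
  qed
qed (use P_ext_outside a in simp)

lemma sum_transversal_block:
  assumes x: "x \<in> K" and i: "i < k"
  shows "(\<Sum>j<k. if inv\<^bsub>G\<^esub> (t i) \<otimes>\<^bsub>G\<^esub> (x \<otimes>\<^bsub>G\<^esub> t j) \<in> L then c else 0) = c"
proof -
  obtain j0 where j0: "j0 < k" and A: "inv\<^bsub>G\<^esub> (t i) \<otimes>\<^bsub>G\<^esub> (x \<otimes>\<^bsub>G\<^esub> t j0) \<in> L"
    using transversal_block_exists[OF x i] by blast
  have "inv\<^bsub>G\<^esub> (t i) \<otimes>\<^bsub>G\<^esub> (x \<otimes>\<^bsub>G\<^esub> t j) \<in> L \<longleftrightarrow> j = j0" if j: "j < k" for j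
    using transversal_block_unique[OF x i j j0 _ A] A by blast
  then have "(\<Sum>j<k. if inv\<^bsub>G\<^esub> (t i) \<otimes>\<^bsub>G\<^esub> (x \<otimes>\<^bsub>G\<^esub> t j) \<in> L then c else 0) = (\<Sum>j<k. if j = j0 then c else 0)"
    by (intro sum.cong refl) simp
  then show ?thesis using j0 by simp
qed

lemma ind_rep_mult:
  assumes x: "x \<in> K" and y: "y \<in> K"
  shows "ind_rep x * ind_rep y = ind_factor x y \<cdot>\<^sub>m ind_rep (x \<otimes>\<^bsub>G\<^esub> y)"
proof (rule eq_matI)
  fix p q assume "p < dim_row (ind_factor x y \<cdot>\<^sub>m ind_rep (x \<otimes>\<^bsub>G\<^esub> y))"
    "q < dim_col (ind_factor x y \<cdot>\<^sub>m ind_rep (x \<otimes>\<^bsub>G\<^esub> y))"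
  then have "p < ind_deg" "q < ind_deg" by auto
  then obtain i a l b where i: "i < k" and a: "a < e" and l: "l < k" and b: "b < e"
    and pq: "p = i * e + a" "q = l * e + b"
    by (elim ind_deg_blockE)
  have "(ind_rep x * ind_rep y) $$ (p,q)
      = (\<Sum>j<k. \<Sum>c<e. ind_rep x $$ (i * e + a, j * e + c) * ind_rep y $$ (j * e + c, l * e + b))"
    unfolding pq mat_mult_index_sum[OF ind_rep_carrier ind_rep_carrier
        block_less_ind_deg[OF i a] block_less_ind_deg[OF l b]] ind_deg_def
    by (rule sum_lessThan_mult_blocks)
  also have "\<dots> = (\<Sum>j<k. if inv\<^bsub>G\<^esub> (t i) \<otimes>\<^bsub>G\<^esub> (x \<otimes>\<^bsub>G\<^esub> t j) \<in> L
      then ind_factor x y * P_ext (inv\<^bsub>G\<^esub> (t i) \<otimes>\<^bsub>G\<^esub> ((x \<otimes>\<^bsub>G\<^esub> y) \<otimes>\<^bsub>G\<^esub> t l)) $$ (a,b) else 0)"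
    using i a l b by (intro sum.cong refl) (simp add: ind_rep_block P_ext_block_product[OF x y])
  also have "\<dots> = (ind_factor x y \<cdot>\<^sub>m ind_rep (x \<otimes>\<^bsub>G\<^esub> y)) $$ (p,q)"
    unfolding sum_transversal_block[OF x i] pq
    using i a l b by (simp add: ind_rep_block block_less_ind_deg)
  finally show "(ind_rep x * ind_rep y) $$ (p,q) = (ind_factor x y \<cdot>\<^sub>m ind_rep (x \<otimes>\<^bsub>G\<^esub> y)) $$ (p,q)" .
qed auto

lemma ind_rep_scalar:
  assumes c: "c \<in> L" and comm: "\<forall>n\<in>N. c \<otimes>\<^bsub>G\<^esub> n = n \<otimes>\<^bsub>G\<^esub> c" and Pc: "P c = z \<cdot>\<^sub>m 1\<^sub>m d"
  shows "ind_rep c = z \<cdot>\<^sub>m 1\<^sub>m ind_deg"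
proof (rule eq_matI)
  fix p q assume "p < dim_row (z \<cdot>\<^sub>m 1\<^sub>m ind_deg)" "q < dim_col (z \<cdot>\<^sub>m 1\<^sub>m ind_deg)"
  then have "p < ind_deg" "q < ind_deg" by auto
  then obtain i a j b where i: "i < k" and a: "a < e" and j: "j < k" and b: "b < e"
    and pq: "p = i * e + a" "q = j * e + b"
    by (elim ind_deg_blockE)
  have d: "d = e" using P_carrier[OF c] Pc by auto
  have "inv\<^bsub>G\<^esub> (t i) \<otimes>\<^bsub>G\<^esub> (c \<otimes>\<^bsub>G\<^esub> t j) = (inv\<^bsub>G\<^esub> (t i) \<otimes>\<^bsub>G\<^esub> t j) \<otimes>\<^bsub>G\<^esub> c"
    using comm t_mem_N[OF j] i j t_carrier L_carrier[OF c] by (simp add: Gr.group_simps)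
  moreover have "(inv\<^bsub>G\<^esub> (t i) \<otimes>\<^bsub>G\<^esub> t j) \<otimes>\<^bsub>G\<^esub> c \<in> L \<longleftrightarrow> i = j"
  proof
    assume "(inv\<^bsub>G\<^esub> (t i) \<otimes>\<^bsub>G\<^esub> t j) \<otimes>\<^bsub>G\<^esub> c \<in> L"
    then have "(inv\<^bsub>G\<^esub> (t i) \<otimes>\<^bsub>G\<^esub> t j) \<otimes>\<^bsub>G\<^esub> c \<otimes>\<^bsub>G\<^esub> inv\<^bsub>G\<^esub> c \<in> L" using L_m_closed L_inv_closed c by blast
    then show "i = j" using t_dist i j t_carrier L_carrier[OF c] by (simp add: Gr.group_simps)
  qed (use i t_carrier L_carrier[OF c] c in simp)
  moreover have "i = j \<Longrightarrow> (inv\<^bsub>G\<^esub> (t i) \<otimes>\<^bsub>G\<^esub> t j) \<otimes>\<^bsub>G\<^esub> c = c" using i t_carrier L_carrier[OF c] by simp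
  ultimately show "ind_rep c $$ (p,q) = (z \<cdot>\<^sub>m 1\<^sub>m ind_deg) $$ (p,q)"
    unfolding pq using i j a b c Pc d
    by (auto simp: ind_rep_block block_less_ind_deg P_ext_def)
qed auto

lemma ind_rep_one: "ind_rep \<one>\<^bsub>G\<^esub> = 1\<^sub>m ind_deg"
  using ind_rep_scalar[OF L_one_closed, of 1 e] P_one N_carrier by simp

lemma ind_factor_nonzero: "x \<in> K \<Longrightarrow> y \<in> K \<Longrightarrow> ind_factor x y \<noteq> 0"
  unfolding ind_factor_def using factor_nonzero coset_rep by auto

lemma ind_factor_N:
  assumes x: "x \<in> K" and n: "n \<in> N"
  shows "ind_factor x n = 1" "ind_factor n x = 1"
proof -
  obtain a where a: "a \<in> L" "inv\<^bsub>G\<^esub> x \<otimes>\<^bsub>G\<^esub> a \<in> N" using coset_rep[OF x] by blast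
  have n1: "inv\<^bsub>G\<^esub> n \<otimes>\<^bsub>G\<^esub> \<one>\<^bsub>G\<^esub> \<in> N" using N_inv_closed[OF n] N_carrier by simp
  show "ind_factor x n = 1"
    using ind_factor_cong_N[OF x N_mem_K[OF n] a(1) L_one_closed a(2) n1] factor_one_right[OF a(1)] by simp
  show "ind_factor n x = 1"
    using ind_factor_cong_N[OF N_mem_K[OF n] x L_one_closed a(1) n1 a(2)] factor_one_left[OF a(1)] by simp
qed

lemma ind_rep_mult_N: assumes x: "x \<in> K" and n: "n \<in> N"
  shows "ind_rep (x \<otimes>\<^bsub>G\<^esub> n) = ind_rep x * ind_rep n" "ind_rep (n \<otimes>\<^bsub>G\<^esub> x) = ind_rep n * ind_rep x"
  using ind_rep_mult[OF x N_mem_K[OF n]] ind_rep_mult[OF N_mem_K[OF n] x] ind_factor_N[OF x n] by simp_all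

lemma ind_rep_inverse: assumes x: "x \<in> K"
  shows "ind_rep x * ((1 / ind_factor x (inv\<^bsub>G\<^esub> x)) \<cdot>\<^sub>m ind_rep (inv\<^bsub>G\<^esub> x)) = 1\<^sub>m ind_deg"
    "((1 / ind_factor x (inv\<^bsub>G\<^esub> x)) \<cdot>\<^sub>m ind_rep (inv\<^bsub>G\<^esub> x)) * ind_rep x = 1\<^sub>m ind_deg"
proof -
  have nz: "ind_factor x (inv\<^bsub>G\<^esub> x) \<noteq> 0" using ind_factor_nonzero[OF x K_inv_closed[OF x]] .
  have "ind_rep x * ((1 / ind_factor x (inv\<^bsub>G\<^esub> x)) \<cdot>\<^sub>m ind_rep (inv\<^bsub>G\<^esub> x))
      = (1 / ind_factor x (inv\<^bsub>G\<^esub> x)) \<cdot>\<^sub>m (ind_rep x * ind_rep (inv\<^bsub>G\<^esub> x))"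
    by (rule mult_smult_distrib[OF ind_rep_carrier ind_rep_carrier])
  also have "\<dots> = 1\<^sub>m ind_deg"
    unfolding ind_rep_mult[OF x K_inv_closed[OF x]] using x K_carrier nz ind_rep_one by simp
  finally show 1: "ind_rep x * ((1 / ind_factor x (inv\<^bsub>G\<^esub> x)) \<cdot>\<^sub>m ind_rep (inv\<^bsub>G\<^esub> x)) = 1\<^sub>m ind_deg" .
  show "((1 / ind_factor x (inv\<^bsub>G\<^esub> x)) \<cdot>\<^sub>m ind_rep (inv\<^bsub>G\<^esub> x)) * ind_rep x = 1\<^sub>m ind_deg"
    by (rule mat_mult_left_right_inverse[OF ind_rep_carrier _ 1]) simp
qed

lemma ind_rep_invertible: "x \<in> K \<Longrightarrow> invertible_mat (ind_rep x)"
  unfolding invertible_mat_def inverts_mat_def using ind_rep_inverse[of x] by (auto simp: square_mat.simps)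

lemma LN_carrier: "L \<inter> N \<subseteq> carrier G" using L_carrier by auto
lemma finite_LN: "finite (L \<inter> N)" using finite_subset[OF LN_carrier fin] .
lemma card_LN_pos: "card (L \<inter> N) > 0" using finite_LN L_one_closed N_one_closed card_gt_0_iff by blast

lemma \<theta>_conj:
  assumes l: "l \<in> L" and z: "z \<in> carrier G"
  shows "\<theta> (l \<otimes>\<^bsub>G\<^esub> z \<otimes>\<^bsub>G\<^esub> inv\<^bsub>G\<^esub> l) = \<theta> z"
proof (cases "z \<in> L \<inter> N")
  case True
  then show ?thesis using \<theta>_inv l by blast
next
  case False
  have "l \<otimes>\<^bsub>G\<^esub> z \<otimes>\<^bsub>G\<^esub> inv\<^bsub>G\<^esub> l \<notin> L \<inter> N"
  proof
    assume c: "l \<otimes>\<^bsub>G\<^esub> z \<otimes>\<^bsub>G\<^esub> inv\<^bsub>G\<^esub> l \<in> L \<inter> N"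
    have "z = inv\<^bsub>G\<^esub> l \<otimes>\<^bsub>G\<^esub> (l \<otimes>\<^bsub>G\<^esub> z \<otimes>\<^bsub>G\<^esub> inv\<^bsub>G\<^esub> l) \<otimes>\<^bsub>G\<^esub> inv\<^bsub>G\<^esub> (inv\<^bsub>G\<^esub> l)"
      using l z L_carrier by (simp add: Gr.group_simps)
    moreover have "inv\<^bsub>G\<^esub> l \<otimes>\<^bsub>G\<^esub> (l \<otimes>\<^bsub>G\<^esub> z \<otimes>\<^bsub>G\<^esub> inv\<^bsub>G\<^esub> l) \<otimes>\<^bsub>G\<^esub> inv\<^bsub>G\<^esub> (inv\<^bsub>G\<^esub> l) \<in> L \<inter> N"
      using nrm L_mem_K[OF L_inv_closed[OF l]] L_m_closed[OF L_m_closed[OF L_inv_closed[OF l] IntD1[OF c]] L_inv_closed[OF L_inv_closed[OF l]]] c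
      by blast
    ultimately show False using False by simp
  qed
  then show ?thesis using False \<theta>_outside by simp
qed

lemma trace_P_ext: "y \<in> N \<Longrightarrow> (\<Sum>c<e. P_ext y $$ (c,c)) = \<theta> y"
  using \<theta>_eq[of y] P_carrier[of y] unfolding P_ext_def mat_trace_def by auto

lemma mat_trace_ind_rep:
  assumes x: "x \<in> N"
  shows "mat_trace (ind_rep x) = (\<Sum>i<k. \<theta> (inv\<^bsub>G\<^esub> (t i) \<otimes>\<^bsub>G\<^esub> (x \<otimes>\<^bsub>G\<^esub> t i)))"
proof -
  have "mat_trace (ind_rep x) = (\<Sum>i<k. \<Sum>c<e. ind_rep x $$ (i * e + c, i * e + c))"
    unfolding mat_trace_def ind_rep_dim ind_deg_def by (rule sum_lessThan_mult_blocks)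
  also have "\<dots> = (\<Sum>i<k. \<theta> (inv\<^bsub>G\<^esub> (t i) \<otimes>\<^bsub>G\<^esub> (x \<otimes>\<^bsub>G\<^esub> t i)))"
    using x by (intro sum.cong refl) (simp add: ind_rep_block trace_P_ext N_m_closed N_inv_closed t_mem_N)
  finally show ?thesis .
qed

lemma bij_transversal_LN: "bij_betw (\<lambda>(i,l). l \<otimes>\<^bsub>G\<^esub> inv\<^bsub>G\<^esub> (t i)) ({..<k} \<times> (L \<inter> N)) N"
proof (rule bij_betw_imageI)
  show "inj_on (\<lambda>(i,l). l \<otimes>\<^bsub>G\<^esub> inv\<^bsub>G\<^esub> (t i)) ({..<k} \<times> (L \<inter> N))"
  proof (rule inj_onI, clarify)
    fix i l j l' assume i: "i < k" and l: "l \<in> L" "l \<in> N" and j: "j < k" and l': "l' \<in> L" "l' \<in> N"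
      and eq: "l \<otimes>\<^bsub>G\<^esub> inv\<^bsub>G\<^esub> (t i) = l' \<otimes>\<^bsub>G\<^esub> inv\<^bsub>G\<^esub> (t j)"
    have "inv\<^bsub>G\<^esub> (t j) \<otimes>\<^bsub>G\<^esub> t i = inv\<^bsub>G\<^esub> l' \<otimes>\<^bsub>G\<^esub> (l' \<otimes>\<^bsub>G\<^esub> inv\<^bsub>G\<^esub> (t j)) \<otimes>\<^bsub>G\<^esub> t i"
      using l' i j L_carrier t_carrier by (simp add: Gr.group_simps)
    also have "\<dots> = inv\<^bsub>G\<^esub> l' \<otimes>\<^bsub>G\<^esub> l"
      unfolding eq[symmetric] using l l' i L_carrier t_carrier by (simp add: Gr.group_simps)
    finally have "inv\<^bsub>G\<^esub> (t j) \<otimes>\<^bsub>G\<^esub> t i \<in> L" using L_m_closed[OF L_inv_closed[OF l'(1)] l(1)] by simp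
    then have "j = i" using t_dist i j by blast
    then show "i = j \<and> l = l'" using eq l l' i L_carrier t_carrier by simp
  qed
  show "(\<lambda>(i,l). l \<otimes>\<^bsub>G\<^esub> inv\<^bsub>G\<^esub> (t i)) ` ({..<k} \<times> (L \<inter> N)) = N"
  proof (intro subset_antisym subsetI)
    fix y assume y: "y \<in> N"
    from t_cover N_inv_closed[OF y] obtain i where i: "i < k" and l0: "inv\<^bsub>G\<^esub> (t i) \<otimes>\<^bsub>G\<^esub> inv\<^bsub>G\<^esub> y \<in> L" by blast
    have "y \<otimes>\<^bsub>G\<^esub> t i = inv\<^bsub>G\<^esub> (inv\<^bsub>G\<^esub> (t i) \<otimes>\<^bsub>G\<^esub> inv\<^bsub>G\<^esub> y)" using y i N_carrier t_carrier by (simp add: Gr.group_simps)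
    then have "y \<otimes>\<^bsub>G\<^esub> t i \<in> L \<inter> N" using L_inv_closed[OF l0] N_m_closed[OF y t_mem_N[OF i]] by auto
    moreover have "y = (y \<otimes>\<^bsub>G\<^esub> t i) \<otimes>\<^bsub>G\<^esub> inv\<^bsub>G\<^esub> (t i)" using y i N_carrier t_carrier by (simp add: Gr.group_simps)
    ultimately show "y \<in> (\<lambda>(i,l). l \<otimes>\<^bsub>G\<^esub> inv\<^bsub>G\<^esub> (t i)) ` ({..<k} \<times> (L \<inter> N))" using i by force
  qed (use N_m_closed N_inv_closed t_mem_N in auto)
qed

lemma induce_eq_mat_trace:
  assumes x: "x \<in> N"
  shows "induce G (L \<inter> N) N \<theta> x = mat_trace (ind_rep x)"
proof -
  have conj: "\<theta> (l \<otimes>\<^bsub>G\<^esub> inv\<^bsub>G\<^esub> (t i) \<otimes>\<^bsub>G\<^esub> x \<otimes>\<^bsub>G\<^esub> inv\<^bsub>G\<^esub> (l \<otimes>\<^bsub>G\<^esub> inv\<^bsub>G\<^esub> (t i)))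
      = \<theta> (inv\<^bsub>G\<^esub> (t i) \<otimes>\<^bsub>G\<^esub> (x \<otimes>\<^bsub>G\<^esub> t i))" if i: "i < k" and l: "l \<in> L" for i l
  proof -
    have "l \<otimes>\<^bsub>G\<^esub> inv\<^bsub>G\<^esub> (t i) \<otimes>\<^bsub>G\<^esub> x \<otimes>\<^bsub>G\<^esub> inv\<^bsub>G\<^esub> (l \<otimes>\<^bsub>G\<^esub> inv\<^bsub>G\<^esub> (t i))
        = l \<otimes>\<^bsub>G\<^esub> (inv\<^bsub>G\<^esub> (t i) \<otimes>\<^bsub>G\<^esub> (x \<otimes>\<^bsub>G\<^esub> t i)) \<otimes>\<^bsub>G\<^esub> inv\<^bsub>G\<^esub> l"
      using l i x L_carrier N_carrier t_carrier by (simp add: Gr.group_simps)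
    then show ?thesis using \<theta>_conj[OF l] i x N_carrier t_carrier by simp
  qed
  have "(\<Sum>y\<in>N. \<theta> (y \<otimes>\<^bsub>G\<^esub> x \<otimes>\<^bsub>G\<^esub> inv\<^bsub>G\<^esub> y))
      = (\<Sum>(i,l)\<in>{..<k} \<times> (L \<inter> N). \<theta> (l \<otimes>\<^bsub>G\<^esub> inv\<^bsub>G\<^esub> (t i) \<otimes>\<^bsub>G\<^esub> x \<otimes>\<^bsub>G\<^esub> inv\<^bsub>G\<^esub> (l \<otimes>\<^bsub>G\<^esub> inv\<^bsub>G\<^esub> (t i))))"
    using sum.reindex_bij_betw[OF bij_transversal_LN, of "\<lambda>y. \<theta> (y \<otimes>\<^bsub>G\<^esub> x \<otimes>\<^bsub>G\<^esub> inv\<^bsub>G\<^esub> y)"]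
    by (simp add: case_prod_beta)
  also have "\<dots> = (\<Sum>i<k. \<Sum>l\<in>L \<inter> N. \<theta> (inv\<^bsub>G\<^esub> (t i) \<otimes>\<^bsub>G\<^esub> (x \<otimes>\<^bsub>G\<^esub> t i)))"
    unfolding sum.cartesian_product[symmetric] using conj by (intro sum.cong refl) auto
  also have "\<dots> = of_nat (card (L \<inter> N)) * mat_trace (ind_rep x)"
    by (simp add: mat_trace_ind_rep[OF x] sum_distrib_left)
  finally have "(\<Sum>y\<in>N. \<theta> (y \<otimes>\<^bsub>G\<^esub> x \<otimes>\<^bsub>G\<^esub> inv\<^bsub>G\<^esub> y)) = of_nat (card (L \<inter> N)) * mat_trace (ind_rep x)" .
  moreover have "induce G (L \<inter> N) N \<theta> x = (\<Sum>y\<in>N. \<theta> (y \<otimes>\<^bsub>G\<^esub> x \<otimes>\<^bsub>G\<^esub> inv\<^bsub>G\<^esub> y)) / of_nat (card (L \<inter> N))"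
    unfolding induce_def using x \<theta>_outside by (auto intro!: sum.cong)
  ultimately show ?thesis using card_LN_pos by simp
qed

lemma induce_one_eq_ind_deg: "induce G (L \<inter> N) N \<theta> \<one>\<^bsub>G\<^esub> = of_nat ind_deg"
  using induce_eq_mat_trace[OF N_one_closed] ind_rep_one unfolding mat_trace_def by simp

lemma ind_rep_is_rep: "is_rep G N ind_deg ind_rep"
  unfolding is_rep_def using ind_rep_one ind_rep_mult ind_factor_N N_mem_K by auto

lemma ind_rep_proj_rep: "proj_rep G K N (induce G (L \<inter> N) N \<theta>) ind_rep ind_factor"
  unfolding proj_rep_def
proof (intro exI[of _ ind_deg] conjI ballI allI)
  show "of_nat ind_deg = induce G (L \<inter> N) N \<theta> \<one>\<^bsub>G\<^esub>" by (simp add: induce_one_eq_ind_deg)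
  show "ind_rep x \<in> carrier_mat ind_deg ind_deg" for x by simp
  show "invertible_mat (ind_rep x)" if "x \<in> K" for x using ind_rep_invertible[OF that] .
  show "ind_rep x * ind_rep y = ind_factor x y \<cdot>\<^sub>m ind_rep (x \<otimes>\<^bsub>G\<^esub> y)" if "x \<in> K" "y \<in> K" for x y
    using ind_rep_mult that .
  show "is_rep G N ind_deg ind_rep" by (rule ind_rep_is_rep)
  show "affords N ind_rep (induce G (L \<inter> N) N \<theta>)"
    unfolding affords_def using induce_eq_mat_trace by (auto simp: induce_def)
  show "ind_rep (x \<otimes>\<^bsub>G\<^esub> n) = ind_rep x * ind_rep n" "ind_rep (n \<otimes>\<^bsub>G\<^esub> x) = ind_rep n * ind_rep x"
    if "x \<in> K" "n \<in> N" for x n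
    using ind_rep_mult_N that by auto
qed

lemma ind_factor_mult_N:
  assumes a: "a \<in> L" and b: "b \<in> L" and n: "n \<in> N" and m: "m \<in> N"
  shows "ind_factor (n \<otimes>\<^bsub>G\<^esub> a) (m \<otimes>\<^bsub>G\<^esub> b) = \<alpha> a b"
proof (rule ind_factor_cong_N[OF K_m_closed[OF N_mem_K[OF n] L_mem_K[OF a]] K_m_closed[OF N_mem_K[OF m] L_mem_K[OF b]] a b])
  show "inv\<^bsub>G\<^esub> (n \<otimes>\<^bsub>G\<^esub> a) \<otimes>\<^bsub>G\<^esub> a \<in> N"
    using conj_inv_N[OF L_mem_K[OF a] N_inv_closed[OF n]] a n L_carrier N_carrier by (simp add: Gr.group_simps)
  show "inv\<^bsub>G\<^esub> (m \<otimes>\<^bsub>G\<^esub> b) \<otimes>\<^bsub>G\<^esub> b \<in> N"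
    using conj_inv_N[OF L_mem_K[OF b] N_inv_closed[OF m]] b m L_carrier N_carrier by (simp add: Gr.group_simps)
qed

lemma centralizer_subset:
  assumes irr_ind: "induce G (L \<inter> N) N \<theta> \<in> Irr G N"
  shows "centralizer_in G K N \<subseteq> L"
proof
  fix c assume "c \<in> centralizer_in G K N"
  then have c: "c \<in> K" and comm: "\<forall>n\<in>N. c \<otimes>\<^bsub>G\<^esub> n = n \<otimes>\<^bsub>G\<^esub> c" unfolding centralizer_in_def by auto
  show "c \<in> L"
  proof (rule ccontr)
    assume cL: "c \<notin> L"
    from irr_ind obtain d R where R: "irreducible_rep G N d R"
      and aff: "affords N R (induce G (L \<inter> N) N \<theta>)" unfolding Irr_def by auto
    have "d = ind_deg"
      using affords_one_degree[OF irreducible_rep_is_rep[OF R] N_one_closed aff] induce_one_eq_ind_deg by simp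
    moreover have "finite N" using finite_subset[OF _ fin] N_carrier by auto
    moreover have "\<forall>g\<in>N. mat_trace (ind_rep g) = mat_trace (R g)"
      using aff induce_eq_mat_trace unfolding affords_def by auto
    moreover have "\<forall>h\<in>N. ind_rep h * ind_rep c = ind_rep c * ind_rep h"
      using ind_rep_mult_N[OF c] comm by metis
    ultimately obtain z where z: "ind_rep c = z \<cdot>\<^sub>m 1\<^sub>m ind_deg"
      using equal_character_commutant_scalar[OF grp N _ _ ind_rep_is_rep _ ind_rep_carrier] R by blast
    have k: "0 < k" using t_cover N_one_closed by auto
    have deg: "0 < ind_deg" using block_less_ind_deg[OF k e_pos] by simp
    have "inv\<^bsub>G\<^esub> (t 0) \<otimes>\<^bsub>G\<^esub> (c \<otimes>\<^bsub>G\<^esub> t 0) = c"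
      using comm t_mem_N[OF k] t_carrier[OF k] K_carrier[OF c] by (simp add: Gr.group_simps)
    then have "ind_rep c $$ (0,0) = 0"
      using ind_rep_block[OF k k e_pos e_pos, of c] P_ext_outside[OF cL e_pos e_pos] by simp
    then have "z = 0" using z deg by simp
    moreover have "z \<noteq> 0" using smult_one_mat_invertible_nonzero ind_rep_invertible[OF c] z deg by metis
    ultimately show False by simp
  qed
qed

lemma induce_invariant:
  assumes x: "x \<in> K" and n: "n \<in> N"
  shows "induce G (L \<inter> N) N \<theta> (x \<otimes>\<^bsub>G\<^esub> n \<otimes>\<^bsub>G\<^esub> inv\<^bsub>G\<^esub> x) = induce G (L \<inter> N) N \<theta> n"
proof -
  define n' where "n' = x \<otimes>\<^bsub>G\<^esub> n \<otimes>\<^bsub>G\<^esub> inv\<^bsub>G\<^esub> x"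
  have n': "n' \<in> N" unfolding n'_def using nrm x n by auto
  have "n' \<otimes>\<^bsub>G\<^esub> x = x \<otimes>\<^bsub>G\<^esub> n" unfolding n'_def using K_carrier[OF x] N_carrier[OF n] by (simp add: Gr.group_simps)
  then have eq: "ind_rep n' * ind_rep x = ind_rep x * ind_rep n"
    using ind_rep_mult_N[OF x n] ind_rep_mult_N[OF x n'] by metis
  define B where "B = (1 / ind_factor x (inv\<^bsub>G\<^esub> x)) \<cdot>\<^sub>m ind_rep (inv\<^bsub>G\<^esub> x)"
  have B: "B \<in> carrier_mat ind_deg ind_deg" unfolding B_def by simp
  have xB: "ind_rep x * B = 1\<^sub>m ind_deg" and Bx: "B * ind_rep x = 1\<^sub>m ind_deg"
    using ind_rep_inverse[OF x] unfolding B_def by auto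
  have "ind_rep n' = ind_rep n' * ind_rep x * B"
    using xB B by (simp add: assoc_mult_mat[OF ind_rep_carrier ind_rep_carrier B])
  also have "\<dots> = ind_rep x * (ind_rep n * B)"
    unfolding eq using B by (simp add: assoc_mult_mat[OF ind_rep_carrier ind_rep_carrier B])
  finally have "mat_trace (ind_rep n') = mat_trace (ind_rep n * B * ind_rep x)"
    using mat_trace_mult_comm[OF ind_rep_carrier mult_carrier_mat[OF ind_rep_carrier B]] by simp
  also have "\<dots> = mat_trace (ind_rep n)" using Bx B by (simp add: assoc_mult_mat[OF ind_rep_carrier B ind_rep_carrier])
  finally show ?thesis using induce_eq_mat_trace n n' unfolding n'_def by simp
qed

lemma induce_char_triple:
  assumes irr_ind: "induce G (L \<inter> N) N \<theta> \<in> Irr G N"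
  shows "char_triple G K N (induce G (L \<inter> N) N \<theta>)"
proof -
  have gK: "group (G\<lparr>carrier := K\<rparr>)" using subgroup.subgroup_is_group[OF K grp] .
  have "subgroup N (G\<lparr>carrier := K\<rparr>)" using Gr.subgroup_incl[OF N K NK] .
  then have "normal N (G\<lparr>carrier := K\<rparr>)"
    unfolding group.normal_inv_iff[OF gK] using nrm Gr.m_inv_consistent[OF K] by simp
  then show ?thesis unfolding char_triple_def using K irr_ind induce_invariant by blast
qed

end

lemma induced_proj_rep_exists:
  assumes grp: "group G" and fin: "finite (carrier G)"
    and K: "subgroup K G" and N: "subgroup N G" and NK: "N \<subseteq> K"
    and nrm: "\<forall>x\<in>K. \<forall>n\<in>N. x \<otimes>\<^bsub>G\<^esub> n \<otimes>\<^bsub>G\<^esub> inv\<^bsub>G\<^esub> x \<in> N"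
    and L: "subgroup L G" and LK: "L \<subseteq> K"
    and KNL: "\<forall>x\<in>K. \<exists>n\<in>N. \<exists>l\<in>L. x = n \<otimes>\<^bsub>G\<^esub> l"
    and irr: "\<theta> \<in> Irr G (L \<inter> N)"
    and \<theta>_inv: "\<forall>l\<in>L. \<forall>n\<in>L \<inter> N. \<theta> (l \<otimes>\<^bsub>G\<^esub> n \<otimes>\<^bsub>G\<^esub> inv\<^bsub>G\<^esub> l) = \<theta> n"
    and proj: "proj_rep G L (L \<inter> N) \<theta> P \<alpha>"
  obtains e k t where "induced_proj_rep G K N L \<theta> P \<alpha> e k t"
proof -
  obtain e where "of_nat e = \<theta> \<one>\<^bsub>G\<^esub>" using proj unfolding proj_rep_def by blast
  moreover obtain k :: nat and t where "\<forall>i<k. t i \<in> N" "\<forall>i<k. \<forall>j<k. inv\<^bsub>G\<^esub> (t i) \<otimes>\<^bsub>G\<^esub> t j \<in> L \<longrightarrow> i = j"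
    "\<forall>n\<in>N. \<exists>i<k. inv\<^bsub>G\<^esub> (t i) \<otimes>\<^bsub>G\<^esub> n \<in> L"
    using left_transversal_exists[OF grp fin N L] by blast
  ultimately have "induced_proj_rep G K N L \<theta> P \<alpha> e k t"
    using assms by (simp add: induced_proj_rep_def)
  then show ?thesis by (rule that)
qed

section \<open>Comparing the induced character triples\<close>

lemma product_normal_swap:
  assumes grp: "group G" and A: "A \<subseteq> carrier G" and M: "M \<subseteq> carrier G"
    and nrm: "\<forall>a\<in>A. \<forall>m\<in>M. a \<otimes>\<^bsub>G\<^esub> m \<otimes>\<^bsub>G\<^esub> inv\<^bsub>G\<^esub> a \<in> M" and x: "x \<in> A <#>\<^bsub>G\<^esub> M"
  shows "\<exists>m\<in>M. \<exists>a\<in>A. x = m \<otimes>\<^bsub>G\<^esub> a"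
proof -
  interpret G: group G by (rule grp)
  obtain a m where a: "a \<in> A" and m: "m \<in> M" and xe: "x = a \<otimes>\<^bsub>G\<^esub> m"
    using x unfolding set_mult_def by blast
  have "a \<in> carrier G" "m \<in> carrier G" using a m A M by auto
  then have "x = (a \<otimes>\<^bsub>G\<^esub> m \<otimes>\<^bsub>G\<^esub> inv\<^bsub>G\<^esub> a) \<otimes>\<^bsub>G\<^esub> a"
    unfolding xe by (simp add: G.group_simps)
  then show ?thesis using nrm a m by blast
qed

lemma product_decompositions:
  assumes grp: "group G" and N: "subgroup N G" and Gt: "subgroup Gt G" and H: "subgroup H G"
    and nrm_H: "\<forall>x\<in>H. \<forall>n\<in>N \<inter> H. x \<otimes>\<^bsub>G\<^esub> n \<otimes>\<^bsub>G\<^esub> inv\<^bsub>G\<^esub> x \<in> N \<inter> H"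
    and GNH: "carrier G = N <#>\<^bsub>G\<^esub> H" and HGM: "H = (Gt \<inter> H) <#>\<^bsub>G\<^esub> (N \<inter> H)"
  shows "\<forall>x\<in>H. \<exists>n\<in>N \<inter> H. \<exists>a\<in>Gt \<inter> H. x = n \<otimes>\<^bsub>G\<^esub> a"
    and "\<forall>x\<in>carrier G. \<exists>n\<in>N. \<exists>a\<in>Gt. x = n \<otimes>\<^bsub>G\<^esub> a"
proof -
  interpret G: group G by (rule grp)
  show dec_H: "\<forall>x\<in>H. \<exists>n\<in>N \<inter> H. \<exists>a\<in>Gt \<inter> H. x = n \<otimes>\<^bsub>G\<^esub> a"
    using product_normal_swap[OF grp _ _ _ HGM[THEN eqset_imp_iff, THEN iffD1]] nrm_H
      subgroup.subset[OF Gt] subgroup.subset[OF H] by blast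
  show "\<forall>x\<in>carrier G. \<exists>n\<in>N. \<exists>a\<in>Gt. x = n \<otimes>\<^bsub>G\<^esub> a"
  proof
    fix x assume "x \<in> carrier G"
    then obtain n h where n: "n \<in> N" and h: "h \<in> H" and x: "x = n \<otimes>\<^bsub>G\<^esub> h"
      using GNH unfolding set_mult_def by blast
    then obtain m a where m: "m \<in> N" and a: "a \<in> Gt" and h: "h = m \<otimes>\<^bsub>G\<^esub> a" using dec_H by blast
    have "x = (n \<otimes>\<^bsub>G\<^esub> m) \<otimes>\<^bsub>G\<^esub> a"
      unfolding x h using n m a subgroup.subset[OF N] subgroup.subset[OF Gt] by (simp add: G.m_assoc subsetD)
    then show "\<exists>n\<in>N. \<exists>a\<in>Gt. x = n \<otimes>\<^bsub>G\<^esub> a" using subgroup.m_closed[OF N n m] a by blast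
  qed
qed

lemma ge_c_of_induced_proj_reps:
  assumes I: "induced_proj_rep G (carrier G) N Gt \<theta> P \<alpha> e k t"
    and I': "induced_proj_rep G H (N \<inter> H) (Gt \<inter> H) \<phi> P' \<alpha>' e' k' t'"
    and GNH: "carrier G = N <#>\<^bsub>G\<^esub> H" and cent: "centralizer_in G (carrier G) N \<subseteq> H"
    and irr_\<theta>: "induce G (Gt \<inter> N) N \<theta> \<in> Irr G N"
    and irr_\<phi>: "induce G (Gt \<inter> (N \<inter> H)) (N \<inter> H) \<phi> \<in> Irr G (N \<inter> H)"
    and factors: "\<forall>x\<in>Gt \<inter> H. \<forall>y\<in>Gt \<inter> H. \<alpha> x y = \<alpha>' x y"
    and scalars: "\<forall>c\<in>centralizer_in G Gt (Gt \<inter> N). \<exists>z d d'. P c = z \<cdot>\<^sub>m 1\<^sub>m d \<and> P' c = z \<cdot>\<^sub>m 1\<^sub>m d'"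
  shows "ge_c G (carrier G) N (induce G (Gt \<inter> N) N \<theta>)
    H (N \<inter> H) (induce G (Gt \<inter> (N \<inter> H)) (N \<inter> H) \<phi>)"
proof -
  have LN_H: "(Gt \<inter> H) \<inter> (N \<inter> H) = Gt \<inter> (N \<inter> H)" by blast
  interpret I: induced_proj_rep G "carrier G" N Gt \<theta> P \<alpha> e k t by (rule I)
  interpret I': induced_proj_rep G H "N \<inter> H" "Gt \<inter> H" \<phi> P' \<alpha>' e' k' t' by (rule I')
  have "I.ind_factor x y = I'.ind_factor x y" if x: "x \<in> H" and y: "y \<in> H" for x y
  proof -
    obtain n a where "n \<in> N \<inter> H" "a \<in> Gt \<inter> H" "x = n \<otimes>\<^bsub>G\<^esub> a" using I'.KNL x by blast
    moreover obtain m b where "m \<in> N \<inter> H" "b \<in> Gt \<inter> H" "y = m \<otimes>\<^bsub>G\<^esub> b" using I'.KNL y by blast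
    ultimately show ?thesis using I.ind_factor_mult_N I'.ind_factor_mult_N factors by auto
  qed
  moreover have "\<exists>z d d'. I.ind_rep c = z \<cdot>\<^sub>m 1\<^sub>m d \<and> I'.ind_rep c = z \<cdot>\<^sub>m 1\<^sub>m d'"
    if c: "c \<in> centralizer_in G (carrier G) N" for c
  proof -
    have "c \<in> Gt" "c \<in> H" using c I.centralizer_subset[OF irr_\<theta>] cent by auto
    moreover have comm: "\<forall>n\<in>N. c \<otimes>\<^bsub>G\<^esub> n = n \<otimes>\<^bsub>G\<^esub> c" using c unfolding centralizer_in_def by blast
    ultimately obtain z d d' where "P c = z \<cdot>\<^sub>m 1\<^sub>m d" "P' c = z \<cdot>\<^sub>m 1\<^sub>m d'"
      using scalars unfolding centralizer_in_def by blast
    then show ?thesis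
      using I.ind_rep_scalar I'.ind_rep_scalar \<open>c \<in> Gt\<close> \<open>c \<in> H\<close> comm by blast
  qed
  ultimately show ?thesis
    unfolding ge_c_def using I.induce_char_triple[OF irr_\<theta>] I'.induce_char_triple[unfolded LN_H, OF irr_\<phi>]
      I.ind_rep_proj_rep I'.ind_rep_proj_rep[unfolded LN_H] subgroup.subset[OF I'.K] GNH cent by blast
qed

theorem lemma2p1:
  fixes G :: "('a,'b) monoid_scheme"
    and N Gt H :: "'a set"
    and \<theta>t \<phi>t :: "'a \<Rightarrow> complex"
  assumes "group G" and "finite (carrier G)"
    and "N \<lhd> G" and "subgroup Gt G" and "subgroup H G"
    and "carrier G = N <#>\<^bsub>G\<^esub> H"
    and "H = (Gt \<inter> H) <#>\<^bsub>G\<^esub> (N \<inter> H)"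
    and "centralizer_in G (carrier G) N \<subseteq> H"
    and "\<theta>t \<in> Irr G (Gt \<inter> N)" and "\<phi>t \<in> Irr G (Gt \<inter> (N \<inter> H))"
    and "induce G (Gt \<inter> N) N \<theta>t \<in> Irr G N"
    and "induce G (Gt \<inter> (N \<inter> H)) (N \<inter> H) \<phi>t \<in> Irr G (N \<inter> H)"
    and "ge_c G Gt (Gt \<inter> N) \<theta>t (Gt \<inter> H) (Gt \<inter> (N \<inter> H)) \<phi>t"
    and "\<forall>J. subgroup J G \<and> N \<subseteq> J \<longrightarrow>
           bij_betw (induce G (J \<inter> Gt) J)
             (Irr_over G (J \<inter> Gt) (Gt \<inter> N) \<theta>t) (Irr_over G J N (induce G (Gt \<inter> N) N \<theta>t)) \<and>
           bij_betw (induce G ((J \<inter> Gt) \<inter> H) (J \<inter> H))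
             (Irr_over G ((J \<inter> Gt) \<inter> H) (Gt \<inter> (N \<inter> H)) \<phi>t)
             (Irr_over G (J \<inter> H) (N \<inter> H) (induce G (Gt \<inter> (N \<inter> H)) (N \<inter> H) \<phi>t))"
  shows "ge_c G (carrier G) N (induce G (Gt \<inter> N) N \<theta>t) H (N \<inter> H) (induce G (Gt \<inter> (N \<inter> H)) (N \<inter> H) \<phi>t)"
proof -
  note grp = assms(1) and Gt = assms(4) and H = assms(5) and GNH = assms(6)
  interpret G: group G by (rule grp)
  have N: "subgroup N G" using normal_imp_subgroup[OF assms(3)] .
  have nrm: "\<forall>x\<in>carrier G. \<forall>n\<in>N. x \<otimes>\<^bsub>G\<^esub> n \<otimes>\<^bsub>G\<^esub> inv\<^bsub>G\<^esub> x \<in> N" using G.normal_inv_iff assms(3) by blast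
  have nrm_H: "\<forall>x\<in>H. \<forall>n\<in>N \<inter> H. x \<otimes>\<^bsub>G\<^esub> n \<otimes>\<^bsub>G\<^esub> inv\<^bsub>G\<^esub> x \<in> N \<inter> H"
    using nrm subgroup.subset[OF H] subgroup.m_closed[OF H] subgroup.m_inv_closed[OF H] by blast
  note dec = product_decompositions[OF grp N Gt H nrm_H GNH assms(7)]
  have LN_H: "(Gt \<inter> H) \<inter> (N \<inter> H) = Gt \<inter> (N \<inter> H)" by blast
  from assms(13) obtain P \<alpha> P' \<alpha>' where ct: "char_triple G Gt (Gt \<inter> N) \<theta>t"
    and ct': "char_triple G (Gt \<inter> H) (Gt \<inter> (N \<inter> H)) \<phi>t"
    and proj: "proj_rep G Gt (Gt \<inter> N) \<theta>t P \<alpha>" and proj': "proj_rep G (Gt \<inter> H) (Gt \<inter> (N \<inter> H)) \<phi>t P' \<alpha>'"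
    and factors: "\<forall>x\<in>Gt \<inter> H. \<forall>y\<in>Gt \<inter> H. \<alpha> x y = \<alpha>' x y"
    and scalars: "\<forall>c\<in>centralizer_in G Gt (Gt \<inter> N). \<exists>z d d'. P c = z \<cdot>\<^sub>m 1\<^sub>m d \<and> P' c = z \<cdot>\<^sub>m 1\<^sub>m d'"
    unfolding ge_c_def by blast
  obtain e k t where "induced_proj_rep G (carrier G) N Gt \<theta>t P \<alpha> e k t"
    using induced_proj_rep_exists[OF grp assms(2) G.subgroup_self N subgroup.subset[OF N] nrm Gt
        subgroup.subset[OF Gt] dec(2) _ _ proj] assms(9) ct
    unfolding char_triple_def by blast
  moreover obtain e' k' t' where "induced_proj_rep G H (N \<inter> H) (Gt \<inter> H) \<phi>t P' \<alpha>' e' k' t'"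
    using induced_proj_rep_exists[OF grp assms(2) H G.subgroups_Inter_pair[OF N H] _ nrm_H
        G.subgroups_Inter_pair[OF Gt H] _ dec(1), of \<phi>t P' \<alpha>'] assms(10) ct' proj'
    unfolding char_triple_def LN_H by blast
  ultimately show ?thesis
    using ge_c_of_induced_proj_reps assms(6,8,11,12) factors scalars by blast
qed

end
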